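(* With $\mathcal{G}_d$ as in the context, let $M_{\vec b}\in\mathbb{F}[x_{\vec b}]^{r\times r}$ for $\vec b\in\{0,1\}^d$ be matrices whose entries are univariate polynomials in the variable $x_{\vec b}$ of degree $<n$. Then $$\mathrm{span}\Big\{\prod_{\vec b\in\{0,1\}^d}M_{\vec b}(x_{\vec b})\Big\}_{\vec x\in\mathbb{F}^{\{0,1\}^d}}=\mathrm{span}\Big\{\prod_{\vec b\in\{0,1\}^d}M_{\vec b}\big(\mathcal{G}_{d,\vec b}(\vec\alpha)\big)\Big\}_{\vec\alpha\in\mathbb{F}^{d+1}}.$$
   Context: Setup: let $n,r\ge1$, $d\ge0$, $D=2^d$; let $\mathbb{F}$ be a field with $|\mathbb{F}|>(Dnr^3)^2$, let $\omega\in\mathbb{F}$ have multiplicative order $\ge(Dnr^2)^2$, let $\beta_0,\dots,\beta_{r^2-1}\in\mathbb{F}$ be distinct and let $p_0,\dots,p_{r^2-1}\in\mathbb{F}[t]$ be the corresponding Lagrange interpolation polynomials (the unique polynomials of degree $<r^2$ with $p_\ell(\beta_i)=1$ if $i=\ell$ and $0$ otherwise); set also $p_{\ell_{-1}}(t):=t$. Define $\mathcal{G}_d:\mathbb{F}^{d+1}\to\mathbb{F}^{\{0,1\}^d}$ with coordinates indexed by $\vec b=(b_0,\dots,b_{d-1})\in\{0,1\}^d$ by $$\mathcal{G}_{d,\vec b}(\alpha_0,\dots,\alpha_d)=\sum_{\ell_0,\dots,\ell_{d-1}\in\{0,\dots,r^2-1\}}\prod_{i=0}^{d-1}\Big((1-b_i)\,p_{\ell_{i-1}}(\omega^{\ell_i}\alpha_i)+b_i\,p_{\ell_{i-1}}\big((\omega^{\ell_i}\alpha_i)^{2^inr^2}\big)\Big)\cdot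 p_{\ell_{d-1}}(\alpha_d),$$ so $\mathcal{G}_0(\alpha_0)=\alpha_0$. Products $\prod_{\vec b\in\{0,1\}^d}$ of matrices are taken from left to right in increasing order of the integer $\sum_{i=0}^{d-1}b_i2^i$ (so $b_{d-1}$ is the most significant bit). Spans are $\mathbb{F}$-linear spans in $\mathbb{F}^{r\times r}$. *)

theory Defs
  imports "Jordan_Normal_Form.Matrix" "HOL-Computational_Algebra.Polynomial"
begin

text \<open>Bit i of the index b (b encodes the vector (b_0,...,b_{d-1}) in {0,1}^d,
  with b = sum of b_i 2^i), as a field element.\<close>
definition bitv :: "nat \<Rightarrow> nat \<Rightarrow> 'a::field" where
  "bitv b i = of_nat ((b div 2 ^ i) mod 2)"

definition pprev :: "(nat \<Rightarrow> 'a::field poly) \<Rightarrow> (nat \<Rightarrow> nat) \<Rightarrow> nat \<Rightarrow> 'a \<Rightarrow> 'a" where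
  "pprev p l i t = (if i = 0 then t else poly (p (l (i - 1))) t)"

text \<open>The map G_{d,b}(alpha_0,...,alpha_d); alpha is given as a function nat => F
  of which only the values at 0..d are used.\<close>
definition Gcal :: "nat \<Rightarrow> nat \<Rightarrow> nat \<Rightarrow> 'a::field \<Rightarrow> (nat \<Rightarrow> 'a poly) \<Rightarrow> nat \<Rightarrow> (nat \<Rightarrow> 'a) \<Rightarrow> 'a" where
  "Gcal n r d \<omega> p b \<alpha> =
     (\<Sum>l\<in>PiE {..<d} (\<lambda>_. {..<r^2}).
        (\<Prod>i<d. (1 - bitv b i) * pprev p l i (\<omega> ^ l i * \<alpha> i)
                 + bitv b i * pprev p l i ((\<omega> ^ l i * \<alpha> i) ^ (2 ^ i * n * r^2)))
        * pprev p l d (\<alpha> d))"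

definition mat_prod_list :: "nat \<Rightarrow> 'a::field mat list \<Rightarrow> 'a mat" where
  "mat_prod_list r As = foldl (*) (1\<^sub>m r) As"

definition mat_span :: "nat \<Rightarrow> 'a::field mat set \<Rightarrow> 'a mat set" where
  "mat_span r S = {A. A \<in> carrier_mat r r \<and>
     (\<exists>T c. finite T \<and> T \<subseteq> S \<and>
        (\<forall>i<r. \<forall>j<r. A $$ (i, j) = (\<Sum>B\<in>T. c B * B $$ (i, j))))}"

end

theory Submission
  imports Defs "Jordan_Normal_Form.Char_Poly" "HOL-Library.Function_Algebras"
begin

(* The values and the coefficient matrices of a matrix polynomial span the same space, and a
   product A(s) B(s') of matrix polynomials with deg A < K lies in the span of the values of the
   Kronecker substitution A(t) B(t^K). A rank condenser replaces all values of a matrix polynomial C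
   of degree < N by the r^2 values C(\<omega>^l a): at most r^2 coefficient matrices (the pivots) span
   all others, and expressing C(\<omega>^l a) through the pivots gives a polynomial matrix in a which at
   a = 0 is a Vandermonde matrix, so every a that is neither 0 nor a root of its determinant will do.
   Merging the 2^d variables pairwise, level by level, with exponent K_i = 2^i n r^2 and one point
   \<alpha>_i that is good for all blocks of the level, the Lagrange polynomials p_l turn the r^2 points
   \<omega>^l \<alpha>_i into the nodes \<beta>_l; the composite substitution built this way is exactly Gcal. *)

section \<open>Linear spans of matrices\<close>

lemma index_mult_mat_sum:
  "X \<in> carrier_mat r r \<Longrightarrow> Y \<in> carrier_mat r r \<Longrightarrow> i < r \<Longrightarrow> j < r \<Longrightarrow>
   (X * Y) $$ (i,j) = (\<Sum>l<r. X $$ (i,l) * Y $$ (l,j))"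
  by (simp add: scalar_prod_def atLeast0LessThan)

lemma mat_span_base: "A \<in> S \<Longrightarrow> A \<in> carrier_mat r r \<Longrightarrow> A \<in> mat_span r S"
  unfolding mat_span_def by (auto intro!: exI[of _ "{A}"] exI[of _ "\<lambda>_. 1"])

lemma mat_span_mono: "S \<subseteq> S' \<Longrightarrow> mat_span r S \<subseteq> mat_span r S'"
  unfolding mat_span_def by blast

lemma mat_span_lincomb:
  fixes F :: "'b \<Rightarrow> 'a::field mat"
  assumes I: "finite I" and F: "\<And>x. x \<in> I \<Longrightarrow> F x \<in> mat_span r S" and B: "B \<in> carrier_mat r r"
    and B_eq: "\<And>i j. i < r \<Longrightarrow> j < r \<Longrightarrow> B $$ (i,j) = (\<Sum>x\<in>I. c x * F x $$ (i,j))"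
  shows "B \<in> mat_span r S"
proof -
  have "\<forall>x\<in>I. \<exists>T e. finite T \<and> T \<subseteq> S \<and>
        (\<forall>i<r. \<forall>j<r. F x $$ (i, j) = (\<Sum>Y\<in>T. e Y * Y $$ (i, j)))"
    using F unfolding mat_span_def by blast
  then obtain T e where T: "\<And>x. x \<in> I \<Longrightarrow> finite (T x) \<and> T x \<subseteq> S \<and>
        (\<forall>i<r. \<forall>j<r. F x $$ (i, j) = (\<Sum>Y\<in>T x. e x Y * Y $$ (i, j)))"
    by metis
  define U where "U = (\<Union>x\<in>I. T x)"
  have U: "finite U" "U \<subseteq> S" using I T unfolding U_def by auto
  define d where "d Y = (\<Sum>x\<in>I. c x * (if Y \<in> T x then e x Y else 0))" for Y
  have "B $$ (i,j) = (\<Sum>Y\<in>U. d Y * Y $$ (i,j))" if ij: "i < r" "j < r" for i j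
  proof -
    have "(\<Sum>Y\<in>U. d Y * Y $$ (i,j))
        = (\<Sum>x\<in>I. c x * (\<Sum>Y\<in>U. if Y \<in> T x then e x Y * Y $$ (i,j) else 0))"
      unfolding d_def sum_distrib_right sum_distrib_left
      by (subst sum.swap) (simp add: mult.assoc if_distrib[of "\<lambda>v. v * _"] cong: if_cong)
    also have "\<dots> = (\<Sum>x\<in>I. c x * (\<Sum>Y\<in>T x. e x Y * Y $$ (i,j)))"
    proof (rule sum.cong[OF refl])
      fix x assume "x \<in> I"
      then have "U \<inter> T x = T x" unfolding U_def by auto
      then show "c x * (\<Sum>Y\<in>U. if Y \<in> T x then e x Y * Y $$ (i,j) else 0)
          = c x * (\<Sum>Y\<in>T x. e x Y * Y $$ (i,j))"
        using U(1) by (simp add: sum.inter_restrict[symmetric])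
    qed
    also have "\<dots> = B $$ (i,j)" using T ij B_eq by (auto intro!: sum.cong)
    finally show ?thesis by simp
  qed
  then show ?thesis unfolding mat_span_def using B U by blast
qed

lemma mat_span_subset_mat_span:
  assumes "S \<subseteq> mat_span r T"
  shows "mat_span r S \<subseteq> mat_span r T"
proof
  fix A assume "A \<in> mat_span r S"
  then obtain S' c where "A \<in> carrier_mat r r" "finite S'" "S' \<subseteq> S"
    "\<forall>i<r. \<forall>j<r. A $$ (i, j) = (\<Sum>B\<in>S'. c B * B $$ (i, j))"
    unfolding mat_span_def by blast
  then show "A \<in> mat_span r T"
    using assms by (intro mat_span_lincomb[of S' id r T A c]) auto
qed

lemma mat_span_smult:
  assumes "A \<in> mat_span r S"
  shows "c \<cdot>\<^sub>m A \<in> mat_span r S"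
proof -
  obtain T e where "A \<in> carrier_mat r r" "finite T" "T \<subseteq> S"
    "\<forall>i<r. \<forall>j<r. A $$ (i, j) = (\<Sum>B\<in>T. e B * B $$ (i, j))"
    using assms unfolding mat_span_def by blast
  then show ?thesis
    unfolding mat_span_def
    by (auto simp: sum_distrib_left mult.assoc intro!: exI[of _ T] exI[of _ "\<lambda>B. c * e B"])
qed

lemma mat_span_mult:
  assumes S: "S \<subseteq> carrier_mat r r" and T: "T \<subseteq> carrier_mat r r"
    and A: "A \<in> mat_span r S" and B: "B \<in> mat_span r T"
  shows "A * B \<in> mat_span r {X * Y | X Y. X \<in> S \<and> Y \<in> T}"
proof -
  obtain SA a where SA: "A \<in> carrier_mat r r" "finite SA" "SA \<subseteq> S"
    "\<forall>i<r. \<forall>j<r. A $$ (i, j) = (\<Sum>X\<in>SA. a X * X $$ (i, j))"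
    using A unfolding mat_span_def by blast
  obtain TB b where TB: "B \<in> carrier_mat r r" "finite TB" "TB \<subseteq> T"
    "\<forall>i<r. \<forall>j<r. B $$ (i, j) = (\<Sum>X\<in>TB. b X * X $$ (i, j))"
    using B unfolding mat_span_def by blast
  show ?thesis
  proof (rule mat_span_lincomb[of "SA \<times> TB" "\<lambda>(X,Y). X * Y" _ _ _ "\<lambda>(X,Y). a X * b Y"])
    fix i j assume ij: "i < r" "j < r"
    have "(A * B) $$ (i,j) = (\<Sum>l<r. A $$ (i,l) * B $$ (l,j))"
      by (rule index_mult_mat_sum[OF SA(1) TB(1) ij])
    also have "\<dots> = (\<Sum>l<r. (\<Sum>X\<in>SA. a X * X $$ (i, l)) * (\<Sum>Y\<in>TB. b Y * Y $$ (l, j)))"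
      using SA(4) TB(4) ij by simp
    also have "\<dots> = (\<Sum>l<r. \<Sum>X\<in>SA. \<Sum>Y\<in>TB. (a X * b Y) * (X $$ (i, l) * Y $$ (l, j)))"
      by (simp add: sum_product mult_ac)
    also have "\<dots> = (\<Sum>X\<in>SA. \<Sum>Y\<in>TB. (a X * b Y) * (\<Sum>l<r. X $$ (i, l) * Y $$ (l, j)))"
      unfolding sum_distrib_left by (subst sum.swap) (rule sum.cong[OF refl], rule sum.swap)
    also have "\<dots> = (\<Sum>(X,Y)\<in>SA \<times> TB. (a X * b Y) * (X * Y) $$ (i, j))"
      unfolding sum.cartesian_product using SA(3) TB(3) S T ij
      by (intro sum.cong refl) (auto simp: index_mult_mat_sum subset_iff)
    finally show "(A * B) $$ (i,j) = (\<Sum>x\<in>SA \<times> TB. (case x of (X, Y) \<Rightarrow> a X * b Y) *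
        (case x of (X, Y) \<Rightarrow> X * Y) $$ (i, j))"
      by (simp add: case_prod_beta')
  next
    fix x assume "x \<in> SA \<times> TB"
    then obtain X Y where "x = (X,Y)" "X \<in> S" "Y \<in> T" using SA(3) TB(3) by auto
    moreover have "X * Y \<in> carrier_mat r r"
      using \<open>X \<in> S\<close> \<open>Y \<in> T\<close> S T by (blast intro: mult_carrier_mat)
    ultimately show "(case x of (X,Y) \<Rightarrow> X * Y) \<in> mat_span r {X * Y | X Y. X \<in> S \<and> Y \<in> T}"
      by (auto intro!: mat_span_base)
  qed (use SA TB in auto)
qed

lemma mat_span_image_coeffs:
  assumes I: "finite I" and A: "A \<in> mat_span r (f ` I)"
  obtains c where "\<And>i j. i < r \<Longrightarrow> j < r \<Longrightarrow> A $$ (i,j) = (\<Sum>x\<in>I. c x * f x $$ (i,j))"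
proof -
  obtain T c where T: "T \<subseteq> f ` I" "\<forall>i<r. \<forall>j<r. A $$ (i, j) = (\<Sum>X\<in>T. c X * X $$ (i, j))"
    using A unfolding mat_span_def by blast
  obtain J where J: "J \<subseteq> I" "T = f ` J" "inj_on f J"
    using subset_image_inj T(1) by metis
  have "A $$ (i,j) = (\<Sum>x\<in>I. (if x \<in> J then c (f x) else 0) * f x $$ (i,j))"
    if ij: "i < r" "j < r" for i j
  proof -
    have "A $$ (i,j) = (\<Sum>x\<in>J. c (f x) * f x $$ (i,j))"
      using T(2) ij J(2,3) by (simp add: sum.reindex)
    also have "\<dots> = (\<Sum>x\<in>I. (if x \<in> J then c (f x) else 0) * f x $$ (i,j))"
      using I J(1) by (intro sum.mono_neutral_cong_left) auto
    finally show ?thesis .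
  qed
  then show ?thesis by (rule that)
qed

lemma det_vandermonde_neq_0:
  fixes x :: "nat \<Rightarrow> 'a::field"
  assumes inj: "inj_on x {..<m}"
  shows "det (mat m m (\<lambda>(l,j). x l ^ j)) \<noteq> 0"
proof
  let ?V = "mat m m (\<lambda>(l,j). x l ^ j)"
  assume "det ?V = 0"
  then obtain v where v: "v \<in> carrier_vec m" "v \<noteq> 0\<^sub>v m" "?V *\<^sub>v v = 0\<^sub>v m"
    using det_0_iff_vec_prod_zero_field[of ?V m] by auto
  define q where "q = (\<Sum>j<m. monom (v $ j) j)"
  have coeff_q: "coeff q j = v $ j" if "j < m" for j
    using that unfolding q_def coeff_sum coeff_monom by (simp add: sum.delta)
  have "q \<noteq> 0"
  proof
    assume "q = 0"
    then have "v = 0\<^sub>v m" using v(1) coeff_q by (intro eq_vecI) auto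
    then show False using v(2) by simp
  qed
  have roots: "x ` {..<m} \<subseteq> {t. poly q t = 0}"
  proof clarify
    fix l assume "l < m"
    then have "poly q (x l) = (?V *\<^sub>v v) $ l"
      using v(1) by (simp add: q_def poly_sum poly_monom scalar_prod_def atLeast0LessThan mult.commute)
    then show "poly q (x l) = 0" using v(3) \<open>l < m\<close> by simp
  qed
  have "m > 0" using v(1,2) by (cases m) auto
  have "degree q \<le> m - 1" unfolding q_def
    by (rule degree_sum_le) (auto intro: order.trans[OF degree_monom_le])
  then have "degree q < m" using \<open>m > 0\<close> by linarith
  have "m = card (x ` {..<m})" using inj by (simp add: card_image)
  also have "\<dots> \<le> card {t. poly q t = 0}"
    using roots poly_roots_finite[OF \<open>q \<noteq> 0\<close>] by (rule card_mono[rotated])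
  also have "\<dots> \<le> degree q" by (rule card_poly_roots_bound[OF \<open>q \<noteq> 0\<close>])
  finally show False using \<open>degree q < m\<close> by simp
qed

lemma mat_span_invertible_combination:
  fixes V :: "'a::field mat"
  assumes V: "V \<in> carrier_mat m m" "det V \<noteq> 0"
    and E: "\<And>l. l < m \<Longrightarrow> E l \<in> carrier_mat r r"
    and E_eq: "\<And>l i i'. l < m \<Longrightarrow> i < r \<Longrightarrow> i' < r \<Longrightarrow>
       E l $$ (i,i') = (\<Sum>j<m. V $$ (l,j) * D j $$ (i,i'))"
    and D: "D j \<in> carrier_mat r r" and j: "j < m"
  shows "D j \<in> mat_span r (E ` {..<m})"
proof -
  obtain W where W: "W \<in> carrier_mat m m" "W * V = 1\<^sub>m m"
    using det_non_zero_imp_unit[OF V, of "()"] unfolding Units_def ring_mat_def by auto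
  show ?thesis
  proof (rule mat_span_lincomb[of "{..<m}" E _ _ _ "\<lambda>l. W $$ (j,l)"])
    fix i i' assume ii': "i < r" "i' < r"
    have "(\<Sum>l<m. W $$ (j,l) * E l $$ (i,i'))
        = (\<Sum>l<m. \<Sum>j'<m. W $$ (j,l) * V $$ (l,j') * D j' $$ (i,i'))"
      using E_eq ii' by (simp add: sum_distrib_left mult.assoc)
    also have "\<dots> = (\<Sum>j'<m. (W * V) $$ (j,j') * D j' $$ (i,i'))"
      using W(1) V(1) j by (subst sum.swap) (simp add: scalar_prod_def atLeast0LessThan sum_distrib_right)
    also have "\<dots> = D j $$ (i,i')"
      using W(2) j by (simp add: sum.delta if_distrib[of "\<lambda>v. v * _"] cong: if_cong)
    finally show "D j $$ (i,i') = (\<Sum>l<m. W $$ (j,l) * E l $$ (i,i'))" by simp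
  qed (use E D in \<open>auto intro: mat_span_base\<close>)
qed

lemma sum_fun_apply: "(\<Sum>x\<in>T. f x) y = (\<Sum>x\<in>T. f x y)"
  by (induction T rule: infinite_finite_induct) auto

(* Matrices are identified with functions on index pairs, a vector space under scale_fun, so that
   the dimension theory of Vector_Spaces bounds the size of independent sets of r x r matrices. *)
definition scale_fun :: "'a::times \<Rightarrow> ('b \<Rightarrow> 'a) \<Rightarrow> 'b \<Rightarrow> 'a" where
  "scale_fun c f = (\<lambda>x. c * f x)"

lemma vector_space_scale_fun: "vector_space (scale_fun :: 'a::field \<Rightarrow> ('b \<Rightarrow> 'a) \<Rightarrow> 'b \<Rightarrow> 'a)"
  by unfold_locales (auto simp: scale_fun_def fun_eq_iff algebra_simps)

definition entry_fun :: "nat \<Rightarrow> 'a::zero mat \<Rightarrow> nat \<times> nat \<Rightarrow> 'a" where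
  "entry_fun r A = (\<lambda>(i,j). if i < r \<and> j < r then A $$ (i,j) else 0)"

lemma mat_span_if_entry_fun_in_span:
  fixes A :: "'a::field mat"
  assumes A: "A \<in> carrier_mat r r" and S: "S \<subseteq> carrier_mat r r"
    and span: "entry_fun r A \<in> module.span scale_fun (entry_fun r ` S)"
  shows "A \<in> mat_span r S"
proof -
  interpret vector_space "scale_fun :: 'a \<Rightarrow> (nat \<times> nat \<Rightarrow> 'a) \<Rightarrow> _"
    by (rule vector_space_scale_fun)
  obtain t u where t: "finite t" "t \<subseteq> entry_fun r ` S"
    and A_eq: "entry_fun r A = (\<Sum>a\<in>t. scale_fun (u a) a)"
    using span unfolding span_explicit by blast
  obtain T where T: "T \<subseteq> S" "t = entry_fun r ` T" "inj_on (entry_fun r) T"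
    using subset_image_inj t(2) by metis
  show ?thesis
  proof (rule mat_span_lincomb[of T id _ _ _ "\<lambda>B. u (entry_fun r B)"])
    show "finite T" using t(1) T(2,3) finite_image_iff by blast
    fix i j assume ij: "i < r" "j < r"
    have "A $$ (i,j) = (\<Sum>a\<in>t. u a * a (i,j))"
      using fun_cong[OF A_eq, of "(i,j)"] ij by (simp add: entry_fun_def sum_fun_apply scale_fun_def)
    also have "\<dots> = (\<Sum>B\<in>T. u (entry_fun r B) * B $$ (i,j))"
      unfolding T(2) sum.reindex[OF T(3)] using ij by (simp add: entry_fun_def)
    finally show "A $$ (i,j) = (\<Sum>B\<in>T. u (entry_fun r B) * id B $$ (i,j))" by simp
  qed (use A S T in \<open>auto intro: mat_span_base\<close>)
qed

lemma entry_fun_in_span_indicators: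
  fixes A :: "'a::field mat"
  shows "entry_fun r A \<in> module.span scale_fun
           ((\<lambda>ij x. if x = ij then 1 else 0) ` ({..<r} \<times> {..<r}))"
proof -
  interpret vector_space "scale_fun :: 'a \<Rightarrow> (nat \<times> nat \<Rightarrow> 'a) \<Rightarrow> _"
    by (rule vector_space_scale_fun)
  have "entry_fun r A = (\<Sum>ij\<in>{..<r} \<times> {..<r}. scale_fun (A $$ ij) (\<lambda>x. if x = ij then 1 else 0))"
    by (auto simp: fun_eq_iff sum_fun_apply scale_fun_def entry_fun_def if_distrib[of "\<lambda>v. _ * v"]
        sum.delta cong: if_cong)
  also have "\<dots> \<in> span ((\<lambda>ij x. if x = ij then 1 else 0) ` ({..<r} \<times> {..<r}))"
    by (intro span_sum span_scale span_base) auto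
  finally show ?thesis .
qed

definition pivots :: "nat \<Rightarrow> (nat \<Rightarrow> 'a::field mat) \<Rightarrow> nat \<Rightarrow> nat set" where
  "pivots r F N = {k. k < N \<and> F k \<notin> mat_span r (F ` {..<k})}"

lemma pivots_subset: "pivots r F N \<subseteq> {..<N}"
  unfolding pivots_def by auto

lemma in_span_pivots:
  assumes F: "\<And>k. F k \<in> carrier_mat r r"
  shows "k < N \<Longrightarrow> F k \<in> mat_span r (F ` (pivots r F N \<inter> {..k}))"
proof (induction k rule: less_induct)
  case (less k)
  show ?case
  proof (cases "k \<in> pivots r F N")
    case True
    then show ?thesis using F by (intro mat_span_base) auto
  next
    case False
    then have k: "F k \<in> mat_span r (F ` {..<k})" using less.prems unfolding pivots_def by auto
    have "F ` {..<k} \<subseteq> mat_span r (F ` (pivots r F N \<inter> {..k}))"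
    proof clarify
      fix k' assume "k' < k"
      then have "F k' \<in> mat_span r (F ` (pivots r F N \<inter> {..k'}))"
        using less.IH less.prems by simp
      also have "\<dots> \<subseteq> mat_span r (F ` (pivots r F N \<inter> {..k}))"
        using \<open>k' < k\<close> by (intro mat_span_mono) auto
      finally show "F k' \<in> mat_span r (F ` (pivots r F N \<inter> {..k}))" .
    qed
    then show ?thesis using k mat_span_subset_mat_span by blast
  qed
qed

lemma independent_pivots:
  fixes F :: "nat \<Rightarrow> 'a::field mat"
  assumes F: "\<And>k. F k \<in> carrier_mat r r"
  shows "\<not> module.dependent scale_fun (entry_fun r ` F ` (pivots r F N \<inter> {..<n}))
    \<and> inj_on (entry_fun r \<circ> F) (pivots r F N \<inter> {..<n})"
proof -
  interpret vector_space "scale_fun :: 'a \<Rightarrow> (nat \<times> nat \<Rightarrow> 'a) \<Rightarrow> _"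
    by (rule vector_space_scale_fun)
  show ?thesis
  proof (induction n)
    case 0
    show ?case by (simp add: independent_empty)
  next
    case (Suc n)
    let ?P = "pivots r F N \<inter> {..<n}"
    show ?case
    proof (cases "n \<in> pivots r F N")
      case False
      then have "pivots r F N \<inter> {..<Suc n} = ?P" by (auto simp: less_Suc_eq)
      then show ?thesis using Suc.IH by simp
    next
      case True
      then have P_Suc: "pivots r F N \<inter> {..<Suc n} = insert n ?P" by (auto simp: less_Suc_eq)
      have new: "entry_fun r (F n) \<notin> span (entry_fun r ` F ` ?P)"
      proof
        assume "entry_fun r (F n) \<in> span (entry_fun r ` F ` ?P)"
        then have "F n \<in> mat_span r (F ` ?P)"
          using F by (intro mat_span_if_entry_fun_in_span) auto
        also have "\<dots> \<subseteq> mat_span r (F ` {..<n})" by (intro mat_span_mono image_mono) auto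
        finally show False using True unfolding pivots_def by simp
      qed
      then have "entry_fun r (F n) \<notin> entry_fun r ` F ` ?P" by (metis span_base)
      then have "inj_on (entry_fun r \<circ> F) (insert n ?P)"
        using Suc.IH unfolding image_comp by (simp add: inj_on_insert comp_def)
      moreover have "independent (insert (entry_fun r (F n)) (entry_fun r ` F ` ?P))"
        using independent_insertI[OF new] Suc.IH by blast
      ultimately show ?thesis unfolding P_Suc image_insert by blast
    qed
  qed
qed

lemma card_pivots_le:
  fixes F :: "nat \<Rightarrow> 'a::field mat"
  assumes F: "\<And>k. F k \<in> carrier_mat r r"
  shows "card (pivots r F N) \<le> r * r"
proof -
  interpret vector_space "scale_fun :: 'a \<Rightarrow> (nat \<times> nat \<Rightarrow> 'a) \<Rightarrow> _"
    by (rule vector_space_scale_fun)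
  let ?U = "(\<lambda>ij x. if x = ij then 1 else 0) ` ({..<r} \<times> {..<r}) :: (nat \<times> nat \<Rightarrow> 'a) set"
  have P: "pivots r F N \<inter> {..<N} = pivots r F N" using pivots_subset by blast
  have ind: "independent (entry_fun r ` F ` pivots r F N)"
    and inj: "inj_on (entry_fun r \<circ> F) (pivots r F N)"
    using independent_pivots[where F=F and r=r and N=N and n=N, OF F] unfolding P by auto
  have "card (pivots r F N) = card (entry_fun r ` F ` pivots r F N)"
    using card_image[OF inj] by (simp add: image_comp)
  also have "\<dots> \<le> card ?U"
    using ind entry_fun_in_span_indicators by (intro conjunct2[OF independent_span_bound]) auto
  also have "\<dots> \<le> r * r" using card_image_le[of "{..<r} \<times> {..<r}"] by simp
  finally show ?thesis .
qed

section \<open>Values and coefficients of matrix polynomials\<close>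

abbreviation eval_mat :: "'a::comm_semiring_0 poly mat \<Rightarrow> 'a \<Rightarrow> 'a mat" where
  "eval_mat A t \<equiv> map_mat (\<lambda>q. poly q t) A"

abbreviation coeff_mat :: "'a::zero poly mat \<Rightarrow> nat \<Rightarrow> 'a mat" where
  "coeff_mat A k \<equiv> map_mat (\<lambda>q. coeff q k) A"

definition mat_degree_less :: "nat \<Rightarrow> 'a::zero poly mat \<Rightarrow> bool" where
  "mat_degree_less N A \<longleftrightarrow> (\<forall>i<dim_row A. \<forall>j<dim_col A. degree (A $$ (i,j)) < N)"

lemma mat_degree_lessD:
  "mat_degree_less N A \<Longrightarrow> A \<in> carrier_mat r r \<Longrightarrow> i < r \<Longrightarrow> j < r \<Longrightarrow> degree (A $$ (i,j)) < N"
  unfolding mat_degree_less_def by auto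

lemma eval_mat_mult:
  fixes A B :: "'a::comm_ring_1 poly mat"
  assumes "A \<in> carrier_mat r r" "B \<in> carrier_mat r r"
  shows "eval_mat (A * B) t = eval_mat A t * eval_mat B t"
  by (rule semiring_hom.mat_hom_mult[OF poly_hom.semiring_hom_axioms assms])

lemma poly_eq_sum_lessThan:
  fixes q :: "'a::comm_semiring_1 poly"
  assumes "degree q < N"
  shows "poly q t = (\<Sum>k<N. coeff q k * t ^ k)"
proof -
  have "poly q t = (\<Sum>k\<le>degree q. coeff q k * t ^ k)" by (rule poly_altdef)
  also have "\<dots> = (\<Sum>k<N. coeff q k * t ^ k)"
    using assms by (intro sum.mono_neutral_left) (auto simp: coeff_eq_0)
  finally show ?thesis .
qed

lemma eval_mat_entry_sum_coeff_mat:
  fixes A :: "'a::field poly mat"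
  assumes "A \<in> carrier_mat r r" "mat_degree_less N A" "i < r" "j < r"
  shows "eval_mat A t $$ (i,j) = (\<Sum>k<N. t ^ k * coeff_mat A k $$ (i,j))"
  using assms poly_eq_sum_lessThan[OF mat_degree_lessD[OF assms(2,1,3,4)]]
  by (simp add: mult.commute)

lemma eval_mat_in_span_coeff_mats:
  fixes A :: "'a::field poly mat"
  assumes A: "A \<in> carrier_mat r r" and deg: "mat_degree_less N A"
  shows "eval_mat A t \<in> mat_span r (coeff_mat A ` {..<N})"
  by (rule mat_span_lincomb[where I="{..<N}" and F="coeff_mat A" and c="\<lambda>k. t ^ k"])
    (use A eval_mat_entry_sum_coeff_mat[OF A deg] in \<open>auto intro: mat_span_base\<close>)

lemma coeff_mat_in_span_eval_mats:
  fixes A :: "'a::field poly mat"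
  assumes A: "A \<in> carrier_mat r r" and deg: "mat_degree_less N A"
    and x: "inj_on x {..<N}" and k: "k < N"
  shows "coeff_mat A k \<in> mat_span r ((\<lambda>l. eval_mat A (x l)) ` {..<N})"
proof (rule mat_span_invertible_combination[where V="mat N N (\<lambda>(l,j). x l ^ j)"])
  show "det (mat N N (\<lambda>(l,j). x l ^ j)) \<noteq> 0" by (rule det_vandermonde_neq_0[OF x])
qed (use A k eval_mat_entry_sum_coeff_mat[OF A deg] in auto)

lemma ex_inj_on_lessThan:
  assumes "infinite (UNIV :: 'a set) \<or> N \<le> card (UNIV :: 'a set)"
  shows "\<exists>x :: nat \<Rightarrow> 'a. inj_on x {..<N}"
proof -
  obtain X :: "'a set" where X: "finite X" "card X = N"
    using assms infinite_arbitrarily_large obtain_subset_with_card_n[of N "UNIV :: 'a set"]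
    by (metis card.infinite not_le_imp_less not_less_zero)
  then obtain x where "bij_betw x {..<N} X"
    using ex_bij_betw_nat_finite[OF X(1)] by (auto simp: atLeast0LessThan)
  then show ?thesis by (auto simp: bij_betw_def)
qed

lemma coeff_mat_in_span_range_eval_mat:
  fixes A :: "'a::field poly mat"
  assumes A: "A \<in> carrier_mat r r" and deg: "mat_degree_less N A" and k: "k < N"
    and card: "infinite (UNIV :: 'a set) \<or> N \<le> card (UNIV :: 'a set)"
  shows "coeff_mat A k \<in> mat_span r (range (eval_mat A))"
proof -
  obtain x :: "nat \<Rightarrow> 'a" where "inj_on x {..<N}" using ex_inj_on_lessThan[OF card] by blast
  then have "coeff_mat A k \<in> mat_span r ((\<lambda>l. eval_mat A (x l)) ` {..<N})"
    by (rule coeff_mat_in_span_eval_mats[OF A deg _ k])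
  also have "\<dots> \<subseteq> mat_span r (range (eval_mat A))" by (intro mat_span_mono) auto
  finally show ?thesis .
qed

section \<open>Kronecker substitution\<close>

lemma coeff_mult_pcompose_monom:
  fixes q h :: "'a::comm_ring_1 poly"
  assumes q: "degree q < K" and k: "k < K"
  shows "coeff (q * (h \<circ>\<^sub>p monom 1 K)) (k + K * k') = coeff q k * coeff h k'"
proof -
  define n where "n = k + K * k'"
  have vanish: "coeff q i * coeff (h \<circ>\<^sub>p monom 1 K) (n - i) = 0" if i: "i \<le> n" "i \<noteq> k" for i
  proof (cases "i < K")
    case True
    have "n mod K = i mod K \<longleftrightarrow> i = k" using True k by (auto simp: n_def)
    then have "(n - i) mod K \<noteq> 0" using i mod_eq_dvd_iff_nat[of i n K] by (simp add: dvd_eq_mod_eq_0)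
    moreover have "n - i = K * ((n - i) div K) + (n - i) mod K" by simp
    ultimately have "coeff (h \<circ>\<^sub>p monom 1 K) (n - i) = 0"
      using k coeff_pcompose_monom[of "(n - i) mod K" K h "(n - i) div K"] by simp
    then show ?thesis by simp
  qed (use q in \<open>simp add: coeff_eq_0\<close>)
  have "coeff (q * (h \<circ>\<^sub>p monom 1 K)) n = (\<Sum>i\<le>n. coeff q i * coeff (h \<circ>\<^sub>p monom 1 K) (n - i))"
    by (rule coeff_mult)
  also have "\<dots> = coeff q k * coeff (h \<circ>\<^sub>p monom 1 K) (K * k' + 0)"
    using vanish by (subst sum.remove[of _ k]) (auto simp: n_def intro!: sum.neutral)
  also have "\<dots> = coeff q k * coeff h k'"
    using k coeff_pcompose_monom[of 0 K h k'] by simp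
  finally show ?thesis by (simp add: n_def)
qed

definition kronecker_subst :: "nat \<Rightarrow> 'a::comm_semiring_1 poly mat \<Rightarrow> 'a poly mat" where
  "kronecker_subst K B = map_mat (\<lambda>q. q \<circ>\<^sub>p monom 1 K) B"

lemma kronecker_subst_carrier [simp]: "B \<in> carrier_mat r r \<Longrightarrow> kronecker_subst K B \<in> carrier_mat r r"
  by (simp add: kronecker_subst_def)

lemma eval_kronecker_subst:
  "eval_mat (kronecker_subst K B) t = eval_mat (B :: 'a::comm_ring_1 poly mat) (t ^ K)"
  unfolding kronecker_subst_def by (rule eq_matI) (auto simp: poly_pcompose poly_monom)

lemma index_mult_kronecker_subst:
  fixes A B :: "'a::comm_semiring_1 poly mat"
  assumes "A \<in> carrier_mat r r" "B \<in> carrier_mat r r" "i < r" "j < r"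
  shows "(A * kronecker_subst K B) $$ (i,j) = (\<Sum>l<r. A $$ (i,l) * (B $$ (l,j) \<circ>\<^sub>p monom 1 K))"
  using assms by (subst index_mult_mat_sum[of _ r]) (auto simp: kronecker_subst_def intro!: sum.cong)

lemma coeff_mat_mult_kronecker_subst:
  fixes A B :: "'a::comm_ring_1 poly mat"
  assumes A: "A \<in> carrier_mat r r" and B: "B \<in> carrier_mat r r"
    and deg: "mat_degree_less K A" and k: "k < K"
  shows "coeff_mat (A * kronecker_subst K B) (k + K * k') = coeff_mat A k * coeff_mat B k'"
proof (rule eq_matI)
  fix i j
  assume "i < dim_row (coeff_mat A k * coeff_mat B k')" "j < dim_col (coeff_mat A k * coeff_mat B k')"
  then have ij: "i < r" "j < r" using A B by auto
  have "coeff_mat (A * kronecker_subst K B) (k + K * k') $$ (i,j)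
      = coeff ((A * kronecker_subst K B) $$ (i,j)) (k + K * k')"
    using A B ij by (intro index_map_mat) (auto simp: kronecker_subst_def)
  also have "\<dots> = (\<Sum>l<r. coeff (A $$ (i,l) * (B $$ (l,j) \<circ>\<^sub>p monom 1 K)) (k + K * k'))"
    using A B ij by (simp add: index_mult_kronecker_subst coeff_sum)
  also have "\<dots> = (\<Sum>l<r. coeff (A $$ (i,l)) k * coeff (B $$ (l,j)) k')"
    using mat_degree_lessD[OF deg A] ij k by (intro sum.cong refl coeff_mult_pcompose_monom) auto
  also have "\<dots> = (coeff_mat A k * coeff_mat B k') $$ (i,j)"
    using A B ij by (subst index_mult_mat_sum[of _ r]) auto
  finally show "coeff_mat (A * kronecker_subst K B) (k + K * k') $$ (i,j)
      = (coeff_mat A k * coeff_mat B k') $$ (i,j)" .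
qed (use A B in \<open>auto simp: kronecker_subst_def\<close>)

lemma mat_degree_less_mult_kronecker_subst:
  fixes A B :: "'a::comm_ring_1 poly mat"
  assumes A: "A \<in> carrier_mat r r" and B: "B \<in> carrier_mat r r"
    and degA: "mat_degree_less K A" and degB: "mat_degree_less L B"
  shows "mat_degree_less (K * L) (A * kronecker_subst K B)"
  unfolding mat_degree_less_def
proof (intro allI impI)
  fix i j assume "i < dim_row (A * kronecker_subst K B)" "j < dim_col (A * kronecker_subst K B)"
  then have ij: "i < r" "j < r" using A B by (auto simp: kronecker_subst_def)
  have summand_degree: "degree (A $$ (i,l) * (B $$ (l,j) \<circ>\<^sub>p monom 1 K)) \<le> K * L - 1" if l: "l < r" for l
  proof -
    have dA: "degree (A $$ (i,l)) < K" and dB: "degree (B $$ (l,j)) < L"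
      using mat_degree_lessD[OF degA A] mat_degree_lessD[OF degB B] ij l by auto
    have "degree (A $$ (i,l) * (B $$ (l,j) \<circ>\<^sub>p monom 1 K))
        \<le> degree (A $$ (i,l)) + degree (B $$ (l,j) \<circ>\<^sub>p monom 1 K)"
      by (rule degree_mult_le)
    also have "\<dots> \<le> degree (A $$ (i,l)) + degree (B $$ (l,j)) * K"
      using degree_pcompose_le[of "B $$ (l,j)" "monom 1 K"] by (simp add: degree_monom_eq)
    also have "\<dots> \<le> (K - 1) + (L - 1) * K" using dA dB by (intro add_mono mult_right_mono) auto
    also have "\<dots> = K * L - 1" using dA dB by (cases K; cases L) (auto simp: algebra_simps)
    finally show ?thesis .
  qed
  have "degree ((A * kronecker_subst K B) $$ (i,j)) \<le> K * L - 1"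
    unfolding index_mult_kronecker_subst[OF A B ij] by (rule degree_sum_le[OF _ summand_degree]) auto
  moreover have "0 < K * L"
    using mat_degree_lessD[OF degA A ij] mat_degree_lessD[OF degB B ij] by simp
  ultimately show "degree ((A * kronecker_subst K B) $$ (i,j)) < K * L" by linarith
qed

lemma eval_mat_mult_in_span_kronecker:
  fixes A B :: "'a::field poly mat"
  assumes A: "A \<in> carrier_mat r r" and B: "B \<in> carrier_mat r r"
    and degA: "mat_degree_less K A" and degB: "mat_degree_less L B"
    and card: "infinite (UNIV :: 'a set) \<or> K * L \<le> card (UNIV :: 'a set)"
  shows "eval_mat A s * eval_mat B s' \<in> mat_span r (range (\<lambda>t. eval_mat A t * eval_mat B (t ^ K)))"
proof -
  let ?C = "A * kronecker_subst K B"
  have "eval_mat A s * eval_mat B s'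
      \<in> mat_span r {X * Y | X Y. X \<in> coeff_mat A ` {..<K} \<and> Y \<in> coeff_mat B ` {..<L}}"
    using A B by (intro mat_span_mult eval_mat_in_span_coeff_mats degA degB) auto
  also have "\<dots> \<subseteq> mat_span r (range (eval_mat ?C))"
  proof (rule mat_span_subset_mat_span, clarify)
    fix k k' assume k: "k < K" and k': "k' < L"
    have "k + K * k' < K * Suc k'" using k by simp
    also have "\<dots> \<le> K * L" using k' by (intro mult_le_mono2) simp
    finally have "k + K * k' < K * L" .
    then have "coeff_mat ?C (k + K * k') \<in> mat_span r (range (eval_mat ?C))"
      using A B by (intro coeff_mat_in_span_range_eval_mat[OF _
          mat_degree_less_mult_kronecker_subst[OF A B degA degB] _ card]) auto
    then show "coeff_mat A k * coeff_mat B k' \<in> mat_span r (range (eval_mat ?C))"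
      by (simp only: coeff_mat_mult_kronecker_subst[OF A B degA k])
  qed
  also have "range (eval_mat ?C) = range (\<lambda>t. eval_mat A t * eval_mat B (t ^ K))"
    using A B by (simp add: eval_mat_mult eval_kronecker_subst)
  finally show ?thesis .
qed

section \<open>The rank condenser\<close>

(* Entry (l, j) is a^(-kk j) * (\<Sum>k<N. G k j * (\<omega>^l * a)^k) as a polynomial in a; it is one
   because G k j = 0 for k < kk j. *)
definition condenser_mat :: "'a::field \<Rightarrow> nat \<Rightarrow> nat \<Rightarrow> (nat \<Rightarrow> nat) \<Rightarrow> (nat \<Rightarrow> nat \<Rightarrow> 'a) \<Rightarrow> 'a poly mat" where
  "condenser_mat \<omega> N m kk G = mat m m (\<lambda>(l,j). \<Sum>k<N. monom (\<omega> ^ (l * k) * G k j) (k - kk j))"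

lemma condenser_mat_carrier: "condenser_mat \<omega> N m kk G \<in> carrier_mat m m"
  by (simp add: condenser_mat_def)

locale condenser =
  fixes \<omega> :: "'a::field" and N m :: nat and kk :: "nat \<Rightarrow> nat" and G :: "nat \<Rightarrow> nat \<Rightarrow> 'a"
  assumes kk_inj: "inj_on kk {..<m}" and kk_less: "\<And>j. j < m \<Longrightarrow> kk j < N"
    and omega_inj: "inj_on (\<lambda>k. \<omega> ^ k) {..<N}"
    and G_diag: "\<And>j. j < m \<Longrightarrow> G (kk j) j = 1"
    and G_lower: "\<And>j k. j < m \<Longrightarrow> k < kk j \<Longrightarrow> G k j = 0"
begin

lemma poly_condenser_mat_entry:
  assumes l: "l < m" and j: "j < m"
  shows "poly (condenser_mat \<omega> N m kk G $$ (l,j)) a * a ^ kk j = (\<Sum>k<N. \<omega> ^ (l * k) * G k j * a ^ k)"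
proof -
  have "poly (condenser_mat \<omega> N m kk G $$ (l,j)) a * a ^ kk j
      = (\<Sum>k<N. \<omega> ^ (l * k) * G k j * (a ^ (k - kk j) * a ^ kk j))"
    using l j by (simp add: condenser_mat_def poly_sum poly_monom sum_distrib_right mult.assoc)
  also have "\<dots> = (\<Sum>k<N. \<omega> ^ (l * k) * G k j * a ^ k)"
  proof (rule sum.cong[OF refl])
    fix k
    show "\<omega> ^ (l * k) * G k j * (a ^ (k - kk j) * a ^ kk j) = \<omega> ^ (l * k) * G k j * a ^ k"
      using G_lower[OF j, of k] by (cases "kk j \<le> k") (auto simp flip: power_add)
  qed
  finally show ?thesis .
qed

lemma eval_condenser_mat_0:
  "eval_mat (condenser_mat \<omega> N m kk G) 0 = transpose_mat (mat m m (\<lambda>(j,l). (\<omega> ^ kk j) ^ l))"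
proof (rule eq_matI)
  fix l j assume "l < dim_row (transpose_mat (mat m m (\<lambda>(j,l). (\<omega> ^ kk j) ^ l)))"
    "j < dim_col (transpose_mat (mat m m (\<lambda>(j,l). (\<omega> ^ kk j) ^ l)))"
  then have lj: "l < m" "j < m" by auto
  have "eval_mat (condenser_mat \<omega> N m kk G) 0 $$ (l,j) = (\<Sum>k<N. \<omega> ^ (l * k) * G k j * 0 ^ (k - kk j))"
    using lj by (simp add: condenser_mat_def poly_sum poly_monom)
  also have "\<dots> = (\<Sum>k<N. if k = kk j then \<omega> ^ (l * k) else 0)"
  proof (rule sum.cong[OF refl])
    fix k
    show "\<omega> ^ (l * k) * G k j * 0 ^ (k - kk j) = (if k = kk j then \<omega> ^ (l * k) else 0)"
      using G_diag[OF lj(2)] G_lower[OF lj(2), of k] by (cases "k < kk j") auto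
  qed
  also have "\<dots> = (\<omega> ^ kk j) ^ l" using kk_less[OF lj(2)] by (simp add: power_mult[symmetric] mult.commute)
  finally show "eval_mat (condenser_mat \<omega> N m kk G) 0 $$ (l,j)
      = transpose_mat (mat m m (\<lambda>(j,l). (\<omega> ^ kk j) ^ l)) $$ (l,j)" using lj by simp
qed (auto simp: condenser_mat_def)

lemma det_condenser_mat_neq_0: "det (condenser_mat \<omega> N m kk G) \<noteq> 0"
proof
  assume "det (condenser_mat \<omega> N m kk G) = 0"
  then have "det (eval_mat (condenser_mat \<omega> N m kk G) 0) = 0"
    by (simp add: comm_ring_hom.hom_det[OF poly_hom.comm_ring_hom_axioms])
  then have "det (mat m m (\<lambda>(j,l). (\<omega> ^ kk j) ^ l)) = 0"
    unfolding eval_condenser_mat_0 by (subst (asm) det_transpose) auto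
  moreover have "inj_on (\<lambda>j. \<omega> ^ kk j) {..<m}"
    using kk_inj kk_less omega_inj by (auto simp: inj_on_def)
  ultimately show False using det_vandermonde_neq_0 by blast
qed

lemma degree_det_condenser_mat: "degree (det (condenser_mat \<omega> N m kk G)) \<le> (N - 1) * m"
  by (rule degree_det_le)
    (auto simp: condenser_mat_def intro!: degree_sum_le order.trans[OF degree_monom_le])

end

locale condenser_expansion = condenser \<omega> N m kk G
  for \<omega> :: "'a::field" and N m kk G +
  fixes r :: nat and C :: "'a poly mat"
  assumes C: "C \<in> carrier_mat r r" "mat_degree_less N C"
    and expansion: "\<And>k i i'. k < N \<Longrightarrow> i < r \<Longrightarrow> i' < r \<Longrightarrow>
       coeff_mat C k $$ (i,i') = (\<Sum>j<m. G k j * coeff_mat C (kk j) $$ (i,i'))"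
begin

lemma eval_mat_entry_condenser:
  assumes l: "l < m" and ii': "i < r" "i' < r"
  shows "eval_mat C (\<omega> ^ l * a) $$ (i,i')
    = (\<Sum>j<m. eval_mat (condenser_mat \<omega> N m kk G) a $$ (l,j) * (a ^ kk j * coeff_mat C (kk j) $$ (i,i')))"
proof -
  have "eval_mat C (\<omega> ^ l * a) $$ (i,i') = (\<Sum>k<N. (\<omega> ^ l * a) ^ k * coeff_mat C k $$ (i,i'))"
    by (rule eval_mat_entry_sum_coeff_mat[OF C ii'])
  also have "\<dots> = (\<Sum>k<N. \<Sum>j<m. (\<omega> ^ l * a) ^ k * G k j * coeff_mat C (kk j) $$ (i,i'))"
    using expansion ii' by (simp add: sum_distrib_left mult.assoc)
  also have "\<dots> = (\<Sum>j<m. (\<Sum>k<N. \<omega> ^ (l * k) * G k j * a ^ k) * coeff_mat C (kk j) $$ (i,i'))"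
    by (subst sum.swap)
      (simp add: sum_distrib_left sum_distrib_right power_mult_distrib mult_ac flip: power_mult)
  also have "\<dots> = (\<Sum>j<m. (poly (condenser_mat \<omega> N m kk G $$ (l,j)) a * a ^ kk j)
      * coeff_mat C (kk j) $$ (i,i'))"
    using l by (intro sum.cong refl) (simp add: poly_condenser_mat_entry)
  also have "\<dots> = (\<Sum>j<m. eval_mat (condenser_mat \<omega> N m kk G) a $$ (l,j)
      * (a ^ kk j * coeff_mat C (kk j) $$ (i,i')))"
    using l by (intro sum.cong refl) (simp add: condenser_mat_def mult.assoc)
  finally show ?thesis .
qed

lemma coeff_mat_in_span_condensed:
  assumes a: "a \<noteq> 0" "poly (det (condenser_mat \<omega> N m kk G)) a \<noteq> 0" and k: "k < N"
  shows "coeff_mat C k \<in> mat_span r ((\<lambda>l. eval_mat C (\<omega> ^ l * a)) ` {..<m})"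
proof -
  let ?S = "(\<lambda>l. eval_mat C (\<omega> ^ l * a)) ` {..<m}"
  let ?E = "eval_mat (condenser_mat \<omega> N m kk G) a"
  have det: "det ?E \<noteq> 0"
    using a(2) by (simp add: comm_ring_hom.hom_det[OF poly_hom.comm_ring_hom_axioms])
  have pivot: "coeff_mat C (kk j) \<in> mat_span r ?S" if j: "j < m" for j
  proof -
    have "a ^ kk j \<cdot>\<^sub>m coeff_mat C (kk j) \<in> mat_span r ?S"
    proof (rule mat_span_invertible_combination[where V="?E" and E="\<lambda>l. eval_mat C (\<omega> ^ l * a)"
          and D="\<lambda>j. a ^ kk j \<cdot>\<^sub>m coeff_mat C (kk j)"])
      fix l i i' assume li: "l < m" "i < r" "i' < r"
      then show "eval_mat C (\<omega> ^ l * a) $$ (i,i')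
          = (\<Sum>j<m. ?E $$ (l,j) * (a ^ kk j \<cdot>\<^sub>m coeff_mat C (kk j)) $$ (i,i'))"
        using eval_mat_entry_condenser[OF li, of a] C(1) by simp
    qed (use det j C(1) condenser_mat_carrier in simp_all)
    then have "inverse (a ^ kk j) \<cdot>\<^sub>m (a ^ kk j \<cdot>\<^sub>m coeff_mat C (kk j)) \<in> mat_span r ?S"
      by (rule mat_span_smult)
    also have "inverse (a ^ kk j) \<cdot>\<^sub>m (a ^ kk j \<cdot>\<^sub>m coeff_mat C (kk j)) = coeff_mat C (kk j)"
      using a(1) by (intro eq_matI) auto
    finally show ?thesis .
  qed
  show ?thesis
  proof (rule mat_span_lincomb[where I="{..<m}" and F="\<lambda>j. coeff_mat C (kk j)" and c="G k"])
    fix i i' assume "i < r" "i' < r"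
    then show "coeff_mat C k $$ (i,i') = (\<Sum>j<m. G k j * coeff_mat C (kk j) $$ (i,i'))"
      by (rule expansion[OF k])
  qed (use pivot C(1) in \<open>simp_all add: lessThan_def\<close>)
qed

lemma eval_mat_in_span_condensed:
  assumes "a \<noteq> 0" "poly (det (condenser_mat \<omega> N m kk G)) a \<noteq> 0"
  shows "eval_mat C t \<in> mat_span r ((\<lambda>l. eval_mat C (\<omega> ^ l * a)) ` {..<m})"
proof -
  have "eval_mat C t \<in> mat_span r (coeff_mat C ` {..<N})"
    by (rule eval_mat_in_span_coeff_mats[OF C])
  also have "\<dots> \<subseteq> mat_span r ((\<lambda>l. eval_mat C (\<omega> ^ l * a)) ` {..<m})"
    by (intro mat_span_subset_mat_span image_subsetI coeff_mat_in_span_condensed[OF assms]) simp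
  finally show ?thesis .
qed

end

lemma pivot_coefficients:
  fixes F :: "nat \<Rightarrow> 'a::field mat" and kk :: "nat \<Rightarrow> nat"
  assumes F: "\<And>k. F k \<in> carrier_mat r r" and kk: "bij_betw kk {..<m} (pivots r F N)" and k: "k < N"
  obtains g where "\<And>i i'. i < r \<Longrightarrow> i' < r \<Longrightarrow> F k $$ (i,i') = (\<Sum>j<m. g j * F (kk j) $$ (i,i'))"
    "\<And>j. j < m \<Longrightarrow> kk j = k \<Longrightarrow> g j = 1" "\<And>j. j < m \<Longrightarrow> k < kk j \<Longrightarrow> g j = 0"
proof -
  let ?P = "pivots r F N"
  have P: "?P = kk ` {..<m}" "inj_on kk {..<m}" using kk by (auto simp: bij_betw_def)
  show ?thesis
  proof (cases "k \<in> ?P")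
    case True
    then obtain j0 where j0: "j0 < m" "kk j0 = k" using P(1) by auto
    have "F k $$ (i,i') = (\<Sum>j<m. (if j = j0 then 1 else 0) * F (kk j) $$ (i,i'))" for i i'
      using j0 by (simp add: if_distrib[of "\<lambda>v. v * _"] cong: if_cong)
    then show ?thesis
      using j0 P(2) by (intro that[of "\<lambda>j. if j = j0 then 1 else 0"]) (auto simp: inj_on_def)
  next
    case False
    let ?J = "{j. j < m \<and> kk j \<le> k}"
    have "F ` (?P \<inter> {..k}) = (\<lambda>j. F (kk j)) ` ?J" using P(1) by auto
    then have "F k \<in> mat_span r ((\<lambda>j. F (kk j)) ` ?J)"
      using in_span_pivots[where F=F and r=r and N=N, OF F k] by simp
    then obtain c where c: "\<And>i i'. i < r \<Longrightarrow> i' < r \<Longrightarrow>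
        F k $$ (i,i') = (\<Sum>j\<in>?J. c j * F (kk j) $$ (i,i'))"
      by (rule mat_span_image_coeffs[rotated]) auto
    have "F k $$ (i,i') = (\<Sum>j<m. (if kk j \<le> k then c j else 0) * F (kk j) $$ (i,i'))"
      if "i < r" "i' < r" for i i'
      using c[OF that] by (simp add: if_distrib[of "\<lambda>v. v * _"] sum.If_cases Int_def conj_commute)
    moreover have "kk j \<noteq> k" if "j < m" for j using False P(1) that by auto
    ultimately show ?thesis by (intro that[of "\<lambda>j. if kk j \<le> k then c j else 0"]) auto
  qed
qed

lemma pivot_expansion:
  fixes F :: "nat \<Rightarrow> 'a::field mat" and kk :: "nat \<Rightarrow> nat"
  assumes F: "\<And>k. F k \<in> carrier_mat r r" and kk: "bij_betw kk {..<m} (pivots r F N)"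
  obtains G where
    "\<And>k i i'. k < N \<Longrightarrow> i < r \<Longrightarrow> i' < r \<Longrightarrow> F k $$ (i,i') = (\<Sum>j<m. G k j * F (kk j) $$ (i,i'))"
    "\<And>j. j < m \<Longrightarrow> G (kk j) j = 1"
    "\<And>j k. j < m \<Longrightarrow> k < kk j \<Longrightarrow> G k j = 0"
proof -
  have "\<forall>k\<in>{..<N}. \<exists>g. (\<forall>i<r. \<forall>i'<r. F k $$ (i,i') = (\<Sum>j<m. g j * F (kk j) $$ (i,i')))
      \<and> (\<forall>j<m. kk j = k \<longrightarrow> g j = 1) \<and> (\<forall>j<m. k < kk j \<longrightarrow> g j = 0)"
  proof
    fix k assume "k \<in> {..<N}"
    then have "k < N" by simp
    obtain g where "\<And>i i'. i < r \<Longrightarrow> i' < r \<Longrightarrow> F k $$ (i,i') = (\<Sum>j<m. g j * F (kk j) $$ (i,i'))"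
      "\<And>j. j < m \<Longrightarrow> kk j = k \<Longrightarrow> g j = 1" "\<And>j. j < m \<Longrightarrow> k < kk j \<Longrightarrow> g j = 0"
      by (rule pivot_coefficients[OF F kk \<open>k < N\<close>]) (rule that)
    then show "\<exists>g. (\<forall>i<r. \<forall>i'<r. F k $$ (i,i') = (\<Sum>j<m. g j * F (kk j) $$ (i,i')))
      \<and> (\<forall>j<m. kk j = k \<longrightarrow> g j = 1) \<and> (\<forall>j<m. k < kk j \<longrightarrow> g j = 0)" by blast
  qed
  from bchoice[OF this] obtain G where G: "\<forall>k\<in>{..<N}.
      (\<forall>i<r. \<forall>i'<r. F k $$ (i,i') = (\<Sum>j<m. G k j * F (kk j) $$ (i,i')))
      \<and> (\<forall>j<m. kk j = k \<longrightarrow> G k j = 1) \<and> (\<forall>j<m. k < kk j \<longrightarrow> G k j = 0)" ..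
  have kk_less: "kk j < N" if "j < m" for j
    using kk pivots_subset that by (blast dest: bij_betwE)
  show ?thesis
  proof (rule that[of G])
    fix k i i' assume "k < N" "i < r" "i' < r"
    then show "F k $$ (i,i') = (\<Sum>j<m. G k j * F (kk j) $$ (i,i'))" using G by simp
  next
    fix j assume "j < m"
    then show "G (kk j) j = 1" using G kk_less by simp
  next
    fix j k assume "j < m" "k < kk j"
    then show "G k j = 0" using G kk_less[of j] by simp
  qed
qed

lemma card_insert_zero_roots:
  fixes D :: "'a::idom poly"
  assumes "D \<noteq> 0"
  shows "finite (insert 0 {a. poly D a = 0})" "card (insert 0 {a. poly D a = 0}) \<le> Suc (degree D)"
proof -
  show "finite (insert 0 {a. poly D a = 0})" using poly_roots_finite[OF assms] by simp
  have "card (insert 0 {a. poly D a = 0}) \<le> Suc (card {a. poly D a = 0})"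
    using poly_roots_finite[OF assms] by (simp add: card_insert_if)
  also have "\<dots> \<le> Suc (degree D)" using card_poly_roots_bound[OF assms] by simp
  finally show "card (insert 0 {a. poly D a = 0}) \<le> Suc (degree D)" .
qed

lemma rank_condenser:
  fixes C :: "'a::field poly mat"
  assumes C: "C \<in> carrier_mat r r" "mat_degree_less N C"
    and omega: "inj_on (\<lambda>k. \<omega> ^ k) {..<N}" and R: "r * r \<le> R"
  obtains Bad where "finite Bad" "card Bad \<le> 1 + R * N"
    "\<And>a t. a \<notin> Bad \<Longrightarrow> eval_mat C t \<in> mat_span r ((\<lambda>l. eval_mat C (\<omega> ^ l * a)) ` {..<R})"
proof -
  let ?P = "pivots r (coeff_mat C) N"
  define m where "m = card ?P"
  have F: "coeff_mat C k \<in> carrier_mat r r" for k using C(1) by simp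
  have "finite ?P" by (rule finite_subset[OF pivots_subset]) simp
  then obtain kk where kk: "bij_betw kk {..<m} ?P"
    using ex_bij_betw_nat_finite by (fastforce simp: m_def atLeast0LessThan)
  have kk': "inj_on kk {..<m}" "\<And>j. j < m \<Longrightarrow> kk j < N"
    using kk bij_betwE[OF kk] pivots_subset[of r "coeff_mat C" N] by (auto simp: bij_betw_def)
  have "m \<le> r * r" unfolding m_def by (rule card_pivots_le[where F="coeff_mat C", OF F])
  then have "m \<le> R" using R by simp
  obtain G where G: "\<And>k i i'. k < N \<Longrightarrow> i < r \<Longrightarrow> i' < r \<Longrightarrow>
       coeff_mat C k $$ (i,i') = (\<Sum>j<m. G k j * coeff_mat C (kk j) $$ (i,i'))"
    "\<And>j. j < m \<Longrightarrow> G (kk j) j = 1" "\<And>j k. j < m \<Longrightarrow> k < kk j \<Longrightarrow> G k j = 0"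
    by (rule pivot_expansion[where F="coeff_mat C", OF F kk]) (rule that)
  interpret condenser_expansion \<omega> N m kk G r C
    using kk' omega G C by unfold_locales auto
  let ?D = "det (condenser_mat \<omega> N m kk G)"
  show ?thesis
  proof (rule that[of "insert 0 {a. poly ?D a = 0}"])
    show "finite (insert 0 {a. poly ?D a = 0})"
      by (rule card_insert_zero_roots[OF det_condenser_mat_neq_0])
    have "card (insert 0 {a. poly ?D a = 0}) \<le> Suc (degree ?D)"
      by (rule card_insert_zero_roots[OF det_condenser_mat_neq_0])
    also have "\<dots> \<le> Suc ((N - 1) * m)" using degree_det_condenser_mat by simp
    also have "\<dots> \<le> 1 + R * N"
      using mult_le_mono[OF \<open>m \<le> R\<close> diff_le_self[of N 1]] by (simp add: mult.commute)
    finally show "card (insert 0 {a. poly ?D a = 0}) \<le> 1 + R * N" .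
  next
    fix a t assume "a \<notin> insert 0 {a. poly ?D a = 0}"
    then have "eval_mat C t \<in> mat_span r ((\<lambda>l. eval_mat C (\<omega> ^ l * a)) ` {..<m})"
      by (intro eval_mat_in_span_condensed) auto
    also have "\<dots> \<subseteq> mat_span r ((\<lambda>l. eval_mat C (\<omega> ^ l * a)) ` {..<R})"
      using \<open>m \<le> R\<close> by (intro mat_span_mono image_mono) auto
    finally show "eval_mat C t \<in> mat_span r ((\<lambda>l. eval_mat C (\<omega> ^ l * a)) ` {..<R})" .
  qed
qed

lemma foldl_mult_carrier_mat:
  "A \<in> carrier_mat n n \<Longrightarrow> \<forall>B\<in>set As. B \<in> carrier_mat n n \<Longrightarrow> foldl (*) A As \<in> carrier_mat n n"
  by (induction As arbitrary: A) auto

lemma foldl_mult_mat_assoc: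
  fixes A :: "'a::semiring_1 mat"
  shows "A \<in> carrier_mat n n \<Longrightarrow> \<forall>B\<in>set As. B \<in> carrier_mat n n \<Longrightarrow>
    foldl (*) A As = A * foldl (*) (1\<^sub>m n) As"
proof (induction As arbitrary: A)
  case (Cons B As)
  then have B: "B \<in> carrier_mat n n" and As: "\<forall>B\<in>set As. B \<in> carrier_mat n n" by auto
  have "foldl (*) A (B # As) = A * B * foldl (*) (1\<^sub>m n) As"
    using Cons.IH[of "A * B"] Cons.prems B As by simp
  also have "\<dots> = A * foldl (*) (1\<^sub>m n) (B # As)"
    using Cons.IH[OF B As] Cons.prems B foldl_mult_carrier_mat[OF one_carrier_mat As]
    by (simp add: assoc_mult_mat)
  finally show ?case .
qed simp

lemma foldl_mult_mat_append:
  fixes As Bs :: "'a::semiring_1 mat list"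
  assumes "\<forall>B\<in>set As. B \<in> carrier_mat n n" "\<forall>B\<in>set Bs. B \<in> carrier_mat n n"
  shows "foldl (*) (1\<^sub>m n) (As @ Bs) = foldl (*) (1\<^sub>m n) As * foldl (*) (1\<^sub>m n) Bs"
  unfolding foldl_append
  by (rule foldl_mult_mat_assoc) (use assms in \<open>auto intro: foldl_mult_carrier_mat\<close>)

lemma eval_mat_foldl_mult:
  fixes As :: "'a::comm_ring_1 poly mat list"
  shows "\<forall>B\<in>set As. B \<in> carrier_mat n n \<Longrightarrow>
    eval_mat (foldl (*) (1\<^sub>m n) As) t = foldl (*) (1\<^sub>m n) (map (\<lambda>B. eval_mat B t) As)"
proof (induction As rule: rev_induct)
  case (snoc B As)
  then have "\<forall>B\<in>set As. B \<in> carrier_mat n n" "B \<in> carrier_mat n n" by auto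
  then show ?case
    using snoc.IH by (simp add: foldl_mult_carrier_mat eval_mat_mult[of _ n])
qed (simp add: semiring_hom.mat_hom_one[OF poly_hom.semiring_hom_axioms])

lemma degree_foldl_mult:
  fixes As :: "'a::comm_semiring_1 poly mat list"
  shows "\<forall>B\<in>set As. B \<in> carrier_mat n n \<and> (\<forall>i<n. \<forall>j<n. degree (B $$ (i,j)) \<le> D) \<Longrightarrow>
    i < n \<Longrightarrow> j < n \<Longrightarrow> degree (foldl (*) (1\<^sub>m n) As $$ (i,j)) \<le> length As * D"
proof (induction As arbitrary: i j rule: rev_induct)
  case (snoc B As)
  then have As: "\<forall>B\<in>set As. B \<in> carrier_mat n n" and B: "B \<in> carrier_mat n n" by auto
  have "degree (\<Sum>l<n. foldl (*) (1\<^sub>m n) As $$ (i,l) * B $$ (l,j)) \<le> length As * D + D"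
  proof (rule degree_sum_le)
    fix l assume "l \<in> {..<n}"
    then show "degree (foldl (*) (1\<^sub>m n) As $$ (i,l) * B $$ (l,j)) \<le> length As * D + D"
      using snoc order.trans[OF degree_mult_le] by (intro order.trans[OF degree_mult_le] add_mono) auto
  qed simp
  then show ?case
    using snoc.prems by (simp add: index_mult_mat_sum[OF foldl_mult_carrier_mat[OF one_carrier_mat As] B])
qed (auto simp: one_mat_def)

(* Reading b in binary with bit d - 1 most significant, the c-th block of level i consists of the
   leaves below one node of the complete binary tree of depth d. *)
definition block_prod :: "nat \<Rightarrow> (nat \<Rightarrow> 'a::semiring_1 mat) \<Rightarrow> nat \<Rightarrow> nat \<Rightarrow> 'a mat" where
  "block_prod n A i c = foldl (*) (1\<^sub>m n) (map A [2 ^ i * c..<2 ^ i * Suc c])"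

lemma block_prod_cong:
  "(\<And>b. 2 ^ i * c \<le> b \<Longrightarrow> b < 2 ^ i * Suc c \<Longrightarrow> A b = B b) \<Longrightarrow> block_prod n A i c = block_prod n B i c"
  unfolding block_prod_def by (intro arg_cong[where f="foldl (*) (1\<^sub>m n)"] map_cong) auto

lemma block_prod_carrier:
  "(\<And>b. 2 ^ i * c \<le> b \<Longrightarrow> b < 2 ^ i * Suc c \<Longrightarrow> A b \<in> carrier_mat n n) \<Longrightarrow>
    block_prod n A i c \<in> carrier_mat n n"
  unfolding block_prod_def by (rule foldl_mult_carrier_mat) auto

lemma block_prod_Suc:
  assumes "\<And>b. 2 ^ Suc i * c \<le> b \<Longrightarrow> b < 2 ^ Suc i * Suc c \<Longrightarrow> A b \<in> carrier_mat n n"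
  shows "block_prod n A (Suc i) c = block_prod n A i (2 * c) * block_prod n A i (2 * c + 1)"
proof -
  have "[2 ^ Suc i * c..<2 ^ Suc i * Suc c]
      = [2 ^ i * (2 * c)..<2 ^ i * Suc (2 * c)] @ [2 ^ i * (2 * c + 1)..<2 ^ i * Suc (2 * c + 1)]"
  proof -
    let ?a = "2 ^ i * (2 * c)" and ?h = "2 ^ i :: nat"
    have "2 ^ Suc i * c = ?a" "2 ^ Suc i * Suc c = ?a + ?h + ?h" "2 ^ i * Suc (2 * c) = ?a + ?h"
      "2 ^ i * (2 * c + 1) = ?a + ?h" "2 ^ i * Suc (2 * c + 1) = ?a + ?h + ?h"
      by (simp_all add: algebra_simps)
    then show ?thesis by (simp only:) (rule upt_add_eq_append, simp)
  qed
  then show ?thesis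
    unfolding block_prod_def using assms
    by (simp only: map_append) (rule foldl_mult_mat_append; auto simp: algebra_simps)
qed

lemma eval_mat_block_prod:
  fixes A :: "nat \<Rightarrow> 'a::comm_ring_1 poly mat"
  assumes "\<And>b. 2 ^ i * c \<le> b \<Longrightarrow> b < 2 ^ i * Suc c \<Longrightarrow> A b \<in> carrier_mat n n"
  shows "eval_mat (block_prod n A i c) t = block_prod n (\<lambda>b. eval_mat (A b) t) i c"
  unfolding block_prod_def using assms by (subst eval_mat_foldl_mult) (auto simp: comp_def)

lemma degree_block_prod:
  fixes A :: "nat \<Rightarrow> 'a::comm_semiring_1 poly mat"
  assumes "\<And>b. 2 ^ i * c \<le> b \<Longrightarrow> b < 2 ^ i * Suc c \<Longrightarrow>
      A b \<in> carrier_mat n n \<and> (\<forall>k<n. \<forall>l<n. degree (A b $$ (k,l)) \<le> D)"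
    and "k < n" "l < n"
  shows "degree (block_prod n A i c $$ (k,l)) \<le> 2 ^ i * D"
  using degree_foldl_mult[of "map A [2 ^ i * c..<2 ^ i * Suc c]" n D k l] assms
  by (simp add: block_prod_def)

definition bit_pow :: "nat \<Rightarrow> nat \<Rightarrow> nat \<Rightarrow> nat \<Rightarrow> 'a::monoid_mult \<Rightarrow> 'a" where
  "bit_pow n r i b u = (if odd (b div 2 ^ i) then u ^ (2 ^ i * n * r ^ 2) else u)"

lemma bitv_combination:
  "(1 - bitv b i) * pprev p l i u + bitv b i * pprev p l i (u ^ (2 ^ i * n * r ^ 2))
    = pprev p l i (bit_pow n r i b (u :: 'a::field))"
  by (cases "odd (b div 2 ^ i)")
    (simp_all add: bitv_def bit_pow_def odd_iff_mod_2_eq_one even_iff_mod_2_eq_zero)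

(* poly (Gcal_poly n r \<omega> p i b \<alpha>) s is G_i(\<alpha> 0, ..., \<alpha> (i - 1), s) for the lowest i bits
   of b; the case i = d is Gcal_eq_poly_Gcal_poly. *)
fun Gcal_poly :: "nat \<Rightarrow> nat \<Rightarrow> 'a::field \<Rightarrow> (nat \<Rightarrow> 'a poly) \<Rightarrow> nat \<Rightarrow> nat \<Rightarrow> (nat \<Rightarrow> 'a) \<Rightarrow> 'a poly" where
  "Gcal_poly n r \<omega> p 0 b \<alpha> = [:0, 1:]"
| "Gcal_poly n r \<omega> p (Suc i) b \<alpha> =
     (\<Sum>l<r^2. smult (poly (Gcal_poly n r \<omega> p i b \<alpha>) (bit_pow n r i b (\<omega> ^ l * \<alpha> i))) (p l))"

lemma Gcal_poly_cong: "(\<And>j. j < i \<Longrightarrow> \<alpha> j = \<alpha>' j) \<Longrightarrow> Gcal_poly n r \<omega> p i b \<alpha> = Gcal_poly n r \<omega> p i b \<alpha>'"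
  by (induction i) auto

lemma degree_Gcal_poly:
  assumes "r \<ge> 1" and "\<forall>l<r^2. degree (p l) < r^2"
  shows "degree (Gcal_poly n r \<omega> p i b \<alpha>) \<le> r^2"
proof (cases i)
  case 0
  then show ?thesis using assms(1) by simp
next
  case (Suc j)
  have "degree (Gcal_poly n r \<omega> p (Suc j) b \<alpha>) \<le> r^2"
    unfolding Gcal_poly.simps
    by (rule degree_sum_le) (use assms(2) in \<open>auto intro: order.trans[OF degree_smult_le] less_imp_le\<close>)
  then show ?thesis using Suc by simp
qed

lemma poly_Gcal_poly_Suc_node:
  assumes "\<forall>l<r^2. \<forall>i<r^2. poly (p l) (\<beta> i) = (if i = l then 1 else 0)" and "m < r^2"
  shows "poly (Gcal_poly n r \<omega> p (Suc i) b \<alpha>) (\<beta> m)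
    = poly (Gcal_poly n r \<omega> p i b \<alpha>) (bit_pow n r i b (\<omega> ^ m * \<alpha> i))"
  using assms by (simp add: poly_sum if_distrib[of "\<lambda>v. _ * v"] cong: if_cong)

lemma sum_PiE_lessThan_Suc:
  "(\<Sum>l\<in>PiE {..<Suc i} T. f l) = (\<Sum>y\<in>T i. \<Sum>g\<in>PiE {..<i} T. f (g(i := y)))"
proof -
  have i: "i \<notin> {..<i}" by simp
  show ?thesis
    unfolding lessThan_Suc PiE_insert_eq sum.reindex[OF inj_combinator[OF i]]
    by (simp add: sum.cartesian_product split_def)
qed

lemma Gcal_poly_eq_sum:
  "(\<Sum>l\<in>PiE {..<i} (\<lambda>_. {..<r^2}).
      (\<Prod>j<i. (1 - bitv b j) * pprev p l j (\<omega> ^ l j * \<alpha> j)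
               + bitv b j * pprev p l j ((\<omega> ^ l j * \<alpha> j) ^ (2 ^ j * n * r^2)))
      * pprev p l i s) = poly (Gcal_poly n r \<omega> p i b \<alpha>) (s :: 'a::field)"
proof (induction i arbitrary: s)
  case 0
  show ?case by (simp add: pprev_def)
next
  case (Suc i)
  let ?F = "\<lambda>l j. pprev p l j (bit_pow n r j b (\<omega> ^ l j * \<alpha> j))"
  have step: "(\<Prod>j<Suc i. ?F (g(i := y)) j) * pprev p (g(i := y)) (Suc i) s
      = (\<Prod>j<i. ?F g j) * pprev p g i (bit_pow n r i b (\<omega> ^ y * \<alpha> i)) * poly (p y) s" for g y
  proof -
    have "(\<Prod>j<i. ?F (g(i := y)) j) = (\<Prod>j<i. ?F g j)"
      by (rule prod.cong) (auto simp: pprev_def)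
    moreover have "?F (g(i := y)) i = pprev p g i (bit_pow n r i b (\<omega> ^ y * \<alpha> i))"
      by (cases i) (auto simp: pprev_def)
    moreover have "pprev p (g(i := y)) (Suc i) s = poly (p y) s" by (simp add: pprev_def)
    ultimately show ?thesis by (simp only: prod.lessThan_Suc)
  qed
  have "(\<Sum>l\<in>PiE {..<Suc i} (\<lambda>_. {..<r^2}). (\<Prod>j<Suc i. ?F l j) * pprev p l (Suc i) s)
      = (\<Sum>y<r^2. (\<Sum>g\<in>PiE {..<i} (\<lambda>_. {..<r^2}). (\<Prod>j<i. ?F g j)
          * pprev p g i (bit_pow n r i b (\<omega> ^ y * \<alpha> i))) * poly (p y) s)"
    by (simp only: sum_PiE_lessThan_Suc step sum_distrib_right)
  also have "\<dots> = poly (Gcal_poly n r \<omega> p (Suc i) b \<alpha>) s"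
    using Suc.IH by (simp add: bitv_combination poly_sum)
  finally show ?case by (simp add: bitv_combination)
qed

lemma Gcal_eq_poly_Gcal_poly: "Gcal n r d \<omega> p b \<alpha> = poly (Gcal_poly n r \<omega> p d b \<alpha>) (\<alpha> d)"
  unfolding Gcal_def by (rule Gcal_poly_eq_sum)

section \<open>Merging blocks level by level\<close>

lemma inj_on_power_lessThan:
  fixes \<omega> :: "'a::field"
  assumes "\<omega> \<noteq> 0" and "\<forall>k. 0 < k \<and> k < N \<longrightarrow> \<omega> ^ k \<noteq> 1"
  shows "inj_on (\<lambda>k. \<omega> ^ k) {..<N}"
proof -
  have "\<omega> ^ k \<noteq> \<omega> ^ k'" if "k < k'" "k' < N" for k k'
  proof
    assume "\<omega> ^ k = \<omega> ^ k'"
    moreover have "\<omega> ^ k * \<omega> ^ (k' - k) = \<omega> ^ k'" using that by (simp flip: power_add)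
    ultimately have "\<omega> ^ k * \<omega> ^ (k' - k) = \<omega> ^ k * 1" by simp
    then show False using assms that by simp
  qed
  then show ?thesis by (metis inj_onI lessThan_iff linorder_neqE_nat)
qed

locale Gcal_setting =
  fixes n r d :: nat and \<omega> :: "'a::field" and \<beta> :: "nat \<Rightarrow> 'a" and p :: "nat \<Rightarrow> 'a poly"
    and M :: "nat \<Rightarrow> 'a poly mat"
  assumes n_pos: "n \<ge> 1" and r_pos: "r \<ge> 1"
    and card_field: "infinite (UNIV :: 'a set) \<or> card (UNIV :: 'a set) > (2 ^ d * n * r ^ 3) ^ 2"
    and omega_nonzero: "\<omega> \<noteq> 0"
    and omega_order: "\<forall>k. 0 < k \<and> k < (2 ^ d * n * r ^ 2) ^ 2 \<longrightarrow> \<omega> ^ k \<noteq> 1"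
    and lagrange: "\<forall>l<r^2. degree (p l) < r^2 \<and> (\<forall>i<r^2. poly (p l) (\<beta> i) = (if i = l then 1 else 0))"
    and M: "\<forall>b<2^d. M b \<in> carrier_mat r r \<and> (\<forall>i<r. \<forall>j<r. degree (M b $$ (i, j)) < n)"
begin

abbreviation K :: "nat \<Rightarrow> nat" where
  "K i \<equiv> 2 ^ i * n * r ^ 2"

abbreviation products :: "(nat \<Rightarrow> 'a) \<Rightarrow> 'a mat" where
  "products x \<equiv> mat_prod_list r (map (\<lambda>b. eval_mat (M b) (x b)) [0..<2^d])"

definition block_poly :: "nat \<Rightarrow> nat \<Rightarrow> (nat \<Rightarrow> 'a) \<Rightarrow> 'a poly mat" where
  "block_poly i c \<alpha> = block_prod r (\<lambda>b. map_mat (\<lambda>q. q \<circ>\<^sub>p Gcal_poly n r \<omega> p i b \<alpha>) (M b)) i c"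

definition block_full :: "nat \<Rightarrow> nat \<Rightarrow> (nat \<Rightarrow> 'a) \<Rightarrow> 'a mat" where
  "block_full i c x = block_prod r (\<lambda>b. eval_mat (M b) (x b)) i c"

definition condensed :: "nat \<Rightarrow> (nat \<Rightarrow> 'a) \<Rightarrow> bool" where
  "condensed i \<alpha> \<longleftrightarrow>
     (\<forall>c < 2 ^ (d - i). \<forall>x. block_full i c x \<in> mat_span r (range (eval_mat (block_poly i c \<alpha>))))"

lemma block_index_less:
  assumes "i \<le> d" "c < 2 ^ (d - i)" "b < 2 ^ i * Suc c"
  shows "b < 2 ^ d"
proof -
  have "2 ^ i * Suc c \<le> 2 ^ i * 2 ^ (d - i)" using assms(2) by (intro mult_le_mono2) simp
  also have "\<dots> = 2 ^ d" using assms(1) by (simp flip: power_add)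
  finally show ?thesis using assms(3) by simp
qed

lemma M_carrier: "b < 2 ^ d \<Longrightarrow> M b \<in> carrier_mat r r"
  using M by blast

lemma block_poly_carrier: "i \<le> d \<Longrightarrow> c < 2 ^ (d - i) \<Longrightarrow> block_poly i c \<alpha> \<in> carrier_mat r r"
  unfolding block_poly_def by (rule block_prod_carrier) (auto dest: block_index_less M_carrier)

lemma block_poly_cong: "(\<And>j. j < i \<Longrightarrow> \<alpha> j = \<alpha>' j) \<Longrightarrow> block_poly i c \<alpha> = block_poly i c \<alpha>'"
  unfolding block_poly_def using Gcal_poly_cong[of i \<alpha> \<alpha>'] by simp

lemma eval_block_poly:
  assumes "i \<le> d" "c < 2 ^ (d - i)"
  shows "eval_mat (block_poly i c \<alpha>) s
    = block_prod r (\<lambda>b. eval_mat (M b) (poly (Gcal_poly n r \<omega> p i b \<alpha>) s)) i c"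
  unfolding block_poly_def using assms
  by (subst eval_mat_block_prod) (auto dest: block_index_less M_carrier intro!: block_prod_cong eq_matI
      simp: poly_pcompose)

lemma degree_block_poly:
  assumes "i \<le> d" "c < 2 ^ (d - i)"
  shows "mat_degree_less (K i) (block_poly i c \<alpha>)"
  unfolding mat_degree_less_def
proof (intro allI impI)
  fix k l assume "k < dim_row (block_poly i c \<alpha>)" "l < dim_col (block_poly i c \<alpha>)"
  then have kl: "k < r" "l < r" using carrier_matD[OF block_poly_carrier[OF assms, of \<alpha>]] by auto
  have factor: "map_mat (\<lambda>q. q \<circ>\<^sub>p Gcal_poly n r \<omega> p i b \<alpha>) (M b) \<in> carrier_mat r r
      \<and> (\<forall>k<r. \<forall>l<r.
            degree (map_mat (\<lambda>q. q \<circ>\<^sub>p Gcal_poly n r \<omega> p i b \<alpha>) (M b) $$ (k,l)) \<le> (n - 1) * r^2)"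
    if "b < 2 ^ i * Suc c" for b
  proof -
    have b: "b < 2 ^ d" using block_index_less[OF assms that] .
    have "degree (M b $$ (k,l) \<circ>\<^sub>p Gcal_poly n r \<omega> p i b \<alpha>) \<le> (n - 1) * r^2" if "k < r" "l < r" for k l
    proof -
      have "degree (M b $$ (k,l)) \<le> n - 1" using M b that by fastforce
      moreover have "degree (Gcal_poly n r \<omega> p i b \<alpha>) \<le> r^2"
        using degree_Gcal_poly[OF r_pos] lagrange by blast
      ultimately show ?thesis
        using degree_pcompose_le[of "M b $$ (k,l)"] by (meson order.trans mult_le_mono)
    qed
    then show ?thesis using M_carrier[OF b] by simp
  qed
  have "degree (block_poly i c \<alpha> $$ (k,l)) \<le> 2 ^ i * ((n - 1) * r^2)"
    unfolding block_poly_def by (rule degree_block_prod[OF factor kl]) simp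
  also have "\<dots> < K i" using n_pos r_pos by simp
  finally show "degree (block_poly i c \<alpha> $$ (k,l)) < K i" .
qed

lemma block_full_Suc:
  assumes "Suc i \<le> d" "c < 2 ^ (d - Suc i)"
  shows "block_full (Suc i) c x = block_full i (2 * c) x * block_full i (2 * c + 1) x"
  unfolding block_full_def using assms
  by (intro block_prod_Suc) (auto dest: block_index_less M_carrier)

lemma eval_block_poly_Suc_node:
  assumes i: "Suc i \<le> d" and c: "c < 2 ^ (d - Suc i)" and m: "m < r^2"
  shows "eval_mat (block_poly (Suc i) c \<alpha>) (\<beta> m)
    = eval_mat (block_poly i (2 * c) \<alpha>) (\<omega> ^ m * \<alpha> i)
      * eval_mat (block_poly i (2 * c + 1) \<alpha>) ((\<omega> ^ m * \<alpha> i) ^ K i)"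
proof -
  have c': "2 * c < 2 ^ (d - i)" "2 * c + 1 < 2 ^ (d - i)"
    using i c by (auto simp: Suc_diff_Suc[symmetric] simp del: Suc_diff_Suc)
  have node: "poly (Gcal_poly n r \<omega> p (Suc i) b \<alpha>) (\<beta> m)
      = poly (Gcal_poly n r \<omega> p i b \<alpha>) (if odd e then (\<omega> ^ m * \<alpha> i) ^ K i else \<omega> ^ m * \<alpha> i)"
    if "2 ^ i * e \<le> b" "b < 2 ^ i * Suc e" for b e
    using poly_Gcal_poly_Suc_node[of r p \<beta> m n \<omega> i b \<alpha>] lagrange m div_nat_eqI[OF that]
    by (simp add: bit_pow_def)
  let ?E = "\<lambda>j s. block_prod r (\<lambda>b. eval_mat (M b) (poly (Gcal_poly n r \<omega> p j b \<alpha>) s))"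
  have lo: "?E (Suc i) (\<beta> m) i (2 * c) = ?E i (\<omega> ^ m * \<alpha> i) i (2 * c)"
  proof (rule block_prod_cong)
    fix b assume "2 ^ i * (2 * c) \<le> b" "b < 2 ^ i * Suc (2 * c)"
    from node[OF this] show "eval_mat (M b) (poly (Gcal_poly n r \<omega> p (Suc i) b \<alpha>) (\<beta> m))
        = eval_mat (M b) (poly (Gcal_poly n r \<omega> p i b \<alpha>) (\<omega> ^ m * \<alpha> i))" by simp
  qed
  have hi: "?E (Suc i) (\<beta> m) i (2 * c + 1) = ?E i ((\<omega> ^ m * \<alpha> i) ^ K i) i (2 * c + 1)"
  proof (rule block_prod_cong)
    fix b assume "2 ^ i * (2 * c + 1) \<le> b" "b < 2 ^ i * Suc (2 * c + 1)"
    from node[OF this] show "eval_mat (M b) (poly (Gcal_poly n r \<omega> p (Suc i) b \<alpha>) (\<beta> m))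
        = eval_mat (M b) (poly (Gcal_poly n r \<omega> p i b \<alpha>) ((\<omega> ^ m * \<alpha> i) ^ K i))" by simp
  qed
  have "eval_mat (block_poly (Suc i) c \<alpha>) (\<beta> m) = ?E (Suc i) (\<beta> m) (Suc i) c"
    by (rule eval_block_poly[OF i c])
  also have "\<dots> = ?E (Suc i) (\<beta> m) i (2 * c) * ?E (Suc i) (\<beta> m) i (2 * c + 1)"
    using i c by (intro block_prod_Suc) (auto dest: block_index_less M_carrier)
  also have "\<dots> = ?E i (\<omega> ^ m * \<alpha> i) i (2 * c) * ?E i ((\<omega> ^ m * \<alpha> i) ^ K i) i (2 * c + 1)"
    unfolding lo hi ..
  also have "\<dots> = eval_mat (block_poly i (2 * c) \<alpha>) (\<omega> ^ m * \<alpha> i)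
      * eval_mat (block_poly i (2 * c + 1) \<alpha>) ((\<omega> ^ m * \<alpha> i) ^ K i)"
    using i c' by (simp add: eval_block_poly)
  finally show ?thesis .
qed

lemma K_le: "i < d \<Longrightarrow> K i \<le> 2 ^ d * n * r ^ 2"
  by (intro mult_le_mono1) simp

lemma inj_on_omega_power: "i < d \<Longrightarrow> inj_on (\<lambda>k. \<omega> ^ k) {..<K i * K i}"
proof -
  assume "i < d"
  then have "K i * K i \<le> (2 ^ d * n * r ^ 2) ^ 2" using K_le by (simp add: power2_eq_square mult_le_mono)
  then show ?thesis by (intro inj_on_subset[OF inj_on_power_lessThan[OF omega_nonzero omega_order]]) auto
qed

lemma card_UNIV_ge_K_square: "i < d \<Longrightarrow> infinite (UNIV :: 'a set) \<or> K i * K i \<le> card (UNIV :: 'a set)"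
proof -
  assume "i < d"
  moreover have "r ^ 2 \<le> r ^ 3" using r_pos by (simp add: power_increasing)
  ultimately have "K i \<le> 2 ^ d * n * r ^ 3" using K_le[of i] by (meson le_trans mult_le_mono2)
  then have "K i * K i \<le> (2 ^ d * n * r ^ 3) ^ 2" by (simp add: power2_eq_square mult_le_mono)
  then show ?thesis using card_field by auto
qed

lemma card_bad_points_less:
  assumes i: "i < d" and fin: "finite (UNIV :: 'a set)"
  shows "2 ^ (d - Suc i) * (1 + r ^ 2 * (K i * K i)) < card (UNIV :: 'a set)"
proof -
  have pos: "0 < n * n * r ^ 6" using n_pos r_pos by simp
  have "2 ^ (d - Suc i) * (1 + r ^ 2 * (K i * K i)) \<le> 2 ^ (d - Suc i) * (2 * (r ^ 2 * (K i * K i)))"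
    using n_pos r_pos by (intro mult_le_mono2) simp
  also have "\<dots> = 2 ^ d * 2 ^ i * (n * n * r ^ 6)"
  proof -
    have "(2 :: nat) ^ d = 2 ^ (d - Suc i + Suc i)" using i by simp
    then have "2 ^ (d - Suc i) * 2 * 2 ^ i = (2 :: nat) ^ d" by (simp add: power_add mult_ac)
    moreover have "r ^ 6 = r ^ 2 * r ^ 2 * r ^ 2" by (simp flip: power_add)
    ultimately show ?thesis by (simp add: power2_eq_square mult_ac)
  qed
  also have "\<dots> < 2 ^ d * 2 ^ d * (n * n * r ^ 6)" using i pos by simp
  also have "\<dots> = (2 ^ d * n * r ^ 3) ^ 2" by (simp add: algebra_simps power2_eq_square flip: power_add)
  also have "\<dots> < card (UNIV :: 'a set)" using card_field fin by simp
  finally show ?thesis .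
qed

definition block_kronecker :: "nat \<Rightarrow> nat \<Rightarrow> (nat \<Rightarrow> 'a) \<Rightarrow> 'a poly mat" where
  "block_kronecker i c \<alpha> = block_poly i (2 * c) \<alpha> * kronecker_subst (K i) (block_poly i (2 * c + 1) \<alpha>)"

lemma block_poly_halves:
  assumes "i < d" "c < 2 ^ (d - Suc i)"
  shows "block_poly i (2 * c) \<alpha> \<in> carrier_mat r r" "block_poly i (2 * c + 1) \<alpha> \<in> carrier_mat r r"
    "mat_degree_less (K i) (block_poly i (2 * c) \<alpha>)"
    "mat_degree_less (K i) (block_poly i (2 * c + 1) \<alpha>)"
proof -
  have "i \<le> d" "2 * c < 2 ^ (d - i)" "2 * c + 1 < 2 ^ (d - i)"
    using assms by (auto simp: Suc_diff_Suc[symmetric] simp del: Suc_diff_Suc)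
  then show "block_poly i (2 * c) \<alpha> \<in> carrier_mat r r" "block_poly i (2 * c + 1) \<alpha> \<in> carrier_mat r r"
    "mat_degree_less (K i) (block_poly i (2 * c) \<alpha>)"
    "mat_degree_less (K i) (block_poly i (2 * c + 1) \<alpha>)"
    by (simp_all add: block_poly_carrier degree_block_poly)
qed

lemma block_full_in_span_kronecker:
  assumes i: "i < d" and c: "c < 2 ^ (d - Suc i)" and cond: "condensed i \<alpha>"
  shows "block_full (Suc i) c x \<in> mat_span r (range (eval_mat (block_kronecker i c \<alpha>)))"
proof -
  let ?A = "block_poly i (2 * c) \<alpha>" and ?B = "block_poly i (2 * c + 1) \<alpha>"
  note AB = block_poly_halves[OF i c, of \<alpha>]
  have c': "2 * c < 2 ^ (d - i)" "2 * c + 1 < 2 ^ (d - i)"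
    using i c by (auto simp: Suc_diff_Suc[symmetric] simp del: Suc_diff_Suc)
  have "block_full (Suc i) c x = block_full i (2 * c) x * block_full i (2 * c + 1) x"
    using i c by (intro block_full_Suc) auto
  also have "\<dots> \<in> mat_span r {Y * Z | Y Z. Y \<in> range (eval_mat ?A) \<and> Z \<in> range (eval_mat ?B)}"
    using cond c' AB by (intro mat_span_mult) (auto simp: condensed_def)
  also have "\<dots> \<subseteq> mat_span r (range (\<lambda>t. eval_mat ?A t * eval_mat ?B (t ^ K i)))"
  proof (rule mat_span_subset_mat_span, clarify)
    fix s s'
    show "eval_mat ?A s * eval_mat ?B s'
        \<in> mat_span r (range (\<lambda>t. eval_mat ?A t * eval_mat ?B (t ^ K i)))"
      by (rule eval_mat_mult_in_span_kronecker[OF AB card_UNIV_ge_K_square[OF i]])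
  qed
  also have "range (\<lambda>t. eval_mat ?A t * eval_mat ?B (t ^ K i))
      = range (eval_mat (block_kronecker i c \<alpha>))"
    using AB by (simp add: block_kronecker_def eval_mat_mult eval_kronecker_subst)
  finally show ?thesis .
qed

lemma eval_block_kronecker_node:
  assumes "i < d" "c < 2 ^ (d - Suc i)" "m < r^2"
  shows "eval_mat (block_kronecker i c \<alpha>) (\<omega> ^ m * \<alpha> i) = eval_mat (block_poly (Suc i) c \<alpha>) (\<beta> m)"
  using assms block_poly_halves[OF assms(1,2), of \<alpha>]
  by (simp add: block_kronecker_def eval_mat_mult eval_kronecker_subst eval_block_poly_Suc_node)

definition condenses :: "nat \<Rightarrow> nat \<Rightarrow> (nat \<Rightarrow> 'a) \<Rightarrow> 'a \<Rightarrow> bool" where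
  "condenses i c \<alpha> a \<longleftrightarrow> (\<forall>t. eval_mat (block_kronecker i c \<alpha>) t
     \<in> mat_span r ((\<lambda>l. eval_mat (block_kronecker i c \<alpha>) (\<omega> ^ l * a)) ` {..<r^2}))"

lemma few_bad_points:
  assumes i: "i < d" and c: "c < 2 ^ (d - Suc i)"
  obtains B where "finite B" "card B \<le> 1 + r^2 * (K i * K i)" "\<And>a. a \<notin> B \<Longrightarrow> condenses i c \<alpha> a"
proof -
  note AB = block_poly_halves[OF i c, of \<alpha>]
  have C: "block_kronecker i c \<alpha> \<in> carrier_mat r r" "mat_degree_less (K i * K i) (block_kronecker i c \<alpha>)"
    using AB unfolding block_kronecker_def by (simp_all add: mat_degree_less_mult_kronecker_subst)
  have R: "r * r \<le> r^2" by (simp add: power2_eq_square)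
  show ?thesis
  proof (rule rank_condenser[OF C inj_on_omega_power[OF i] R])
    fix B assume B: "finite B" "card B \<le> 1 + r^2 * (K i * K i)" "\<And>a t. a \<notin> B \<Longrightarrow>
      eval_mat (block_kronecker i c \<alpha>) t
        \<in> mat_span r ((\<lambda>l. eval_mat (block_kronecker i c \<alpha>) (\<omega> ^ l * a)) ` {..<r^2})"
    show thesis by (rule that[OF B(1,2)]) (simp add: condenses_def B(3))
  qed
qed

lemma ex_condensing_point:
  assumes i: "i < d"
  obtains a where "\<And>c. c < 2 ^ (d - Suc i) \<Longrightarrow> condenses i c \<alpha> a"
proof -
  define X :: nat where "X = 2 ^ (d - Suc i)"
  have "\<forall>c\<in>{..<X}. \<exists>B. finite B \<and> card B \<le> 1 + r^2 * (K i * K i) \<and> (\<forall>a. a \<notin> B \<longrightarrow> condenses i c \<alpha> a)"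
  proof
    fix c assume "c \<in> {..<X}"
    then have "c < 2 ^ (d - Suc i)" by (simp add: X_def)
    then obtain B where "finite B" "card B \<le> 1 + r^2 * (K i * K i)" "\<And>a. a \<notin> B \<Longrightarrow> condenses i c \<alpha> a"
      by (rule few_bad_points[OF i, where \<alpha>=\<alpha>]) (rule that)
    then show "\<exists>B. finite B \<and> card B \<le> 1 + r^2 * (K i * K i) \<and> (\<forall>a. a \<notin> B \<longrightarrow> condenses i c \<alpha> a)"
      by blast
  qed
  from bchoice[OF this] obtain Bad where Bad: "\<forall>c\<in>{..<X}. finite (Bad c)
      \<and> card (Bad c) \<le> 1 + r^2 * (K i * K i) \<and> (\<forall>a. a \<notin> Bad c \<longrightarrow> condenses i c \<alpha> a)" ..
  define U where "U = (\<Union>c<X. Bad c)"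
  have "finite U" unfolding U_def using Bad by (intro finite_UN_I) auto
  obtain a where a: "a \<notin> U"
  proof (cases "finite (UNIV :: 'a set)")
    case True
    have "card U \<le> (\<Sum>c<X. card (Bad c))" unfolding U_def by (rule card_UN_le) simp
    also have "\<dots> \<le> (\<Sum>c<X. 1 + r^2 * (K i * K i))" using Bad by (intro sum_mono) auto
    also have "\<dots> = X * (1 + r^2 * (K i * K i))" by simp
    also have "\<dots> < card (UNIV :: 'a set)" unfolding X_def by (rule card_bad_points_less[OF i True])
    finally have "U \<noteq> UNIV" by auto
    then show ?thesis using that by blast
  next
    case False
    then show ?thesis using that ex_new_if_finite[OF False \<open>finite U\<close>] by blast
  qed
  show ?thesis
  proof (rule that)
    fix c :: nat assume "c < 2 ^ (d - Suc i)"
    then have "c \<in> {..<X}" "a \<notin> Bad c" using a unfolding U_def X_def by auto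
    then show "condenses i c \<alpha> a" using Bad by blast
  qed
qed

lemma condensed_Suc:
  assumes i: "i < d" and cond: "condensed i \<alpha>"
  obtains a where "condensed (Suc i) (\<alpha>(i := a))"
proof -
  obtain a where a: "\<And>c. c < 2 ^ (d - Suc i) \<Longrightarrow> condenses i c \<alpha> a"
    using ex_condensing_point[OF i] by blast
  let ?\<alpha> = "\<alpha>(i := a)"
  have "condensed (Suc i) ?\<alpha>"
    unfolding condensed_def
  proof (intro allI impI)
    fix c :: nat and x assume c: "c < 2 ^ (d - Suc i)"
    let ?C = "block_kronecker i c \<alpha>"
    have "block_full (Suc i) c x \<in> mat_span r (range (eval_mat ?C))"
      by (rule block_full_in_span_kronecker[OF i c cond])
    also have "\<dots> \<subseteq> mat_span r ((\<lambda>l. eval_mat ?C (\<omega> ^ l * a)) ` {..<r^2})"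
      using a[OF c] unfolding condenses_def by (intro mat_span_subset_mat_span image_subsetI) blast
    also have "\<dots> \<subseteq> mat_span r (range (eval_mat (block_poly (Suc i) c ?\<alpha>)))"
    proof (rule mat_span_mono, clarify)
      fix l assume "l < r^2"
      have "?C = block_kronecker i c ?\<alpha>"
        unfolding block_kronecker_def by (simp add: block_poly_cong[of i \<alpha> ?\<alpha>])
      then have "eval_mat ?C (\<omega> ^ l * a) = eval_mat (block_poly (Suc i) c ?\<alpha>) (\<beta> l)"
        using eval_block_kronecker_node[OF i c \<open>l < r^2\<close>, of ?\<alpha>] by simp
      then show "eval_mat ?C (\<omega> ^ l * a) \<in> range (eval_mat (block_poly (Suc i) c ?\<alpha>))" by simp
    qed
    finally show "block_full (Suc i) c x \<in> mat_span r (range (eval_mat (block_poly (Suc i) c ?\<alpha>)))" .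
  qed
  then show thesis by (rule that)
qed

lemma condensed_0: "condensed 0 \<alpha>"
  unfolding condensed_def
proof (intro allI impI)
  fix c :: nat and x assume c: "c < 2 ^ (d - 0)"
  have "block_full 0 c x = block_prod r (\<lambda>b. eval_mat (M b) (x c)) 0 c"
    unfolding block_full_def by (rule block_prod_cong) (simp add: le_antisym less_Suc_eq_le)
  also have "\<dots> = eval_mat (block_poly 0 c \<alpha>) (x c)"
    using c by (simp add: eval_block_poly)
  finally show "block_full 0 c x \<in> mat_span r (range (eval_mat (block_poly 0 c \<alpha>)))"
    using block_poly_carrier[of 0 c \<alpha>] c by (auto intro: mat_span_base)
qed

lemma ex_condensed: "i \<le> d \<Longrightarrow> \<exists>\<alpha>. condensed i \<alpha>"
proof (induction i)
  case 0
  show ?case using condensed_0 by blast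
next
  case (Suc i)
  then obtain \<alpha> where "condensed i \<alpha>" by auto
  then show ?case using condensed_Suc[of i \<alpha>] Suc.prems by (metis Suc_le_lessD)
qed

lemma products_in_span_Gcal_products:
  "{products x | x. True} \<subseteq> mat_span r {products (\<lambda>b. Gcal n r d \<omega> p b \<alpha>) | \<alpha>. True}"
proof clarify
  fix x :: "nat \<Rightarrow> 'a"
  obtain \<alpha> where \<alpha>: "condensed d \<alpha>" using ex_condensed by blast
  have "products x = block_full d 0 x"
    by (simp add: mat_prod_list_def block_prod_def block_full_def)
  also have "\<dots> \<in> mat_span r (range (eval_mat (block_poly d 0 \<alpha>)))"
    using \<alpha> by (simp add: condensed_def)
  also have "\<dots> \<subseteq> mat_span r {products (\<lambda>b. Gcal n r d \<omega> p b \<alpha>) | \<alpha>. True}"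
  proof (rule mat_span_mono, rule image_subsetI)
    fix s
    have "eval_mat (block_poly d 0 \<alpha>) s = eval_mat (block_poly d 0 (\<alpha>(d := s))) s"
      by (simp add: block_poly_cong[of d \<alpha> "\<alpha>(d := s)"])
    also have "\<dots> = products (\<lambda>b. Gcal n r d \<omega> p b (\<alpha>(d := s)))"
      by (simp add: eval_block_poly Gcal_eq_poly_Gcal_poly mat_prod_list_def block_prod_def)
    finally show "eval_mat (block_poly d 0 \<alpha>) s \<in> {products (\<lambda>b. Gcal n r d \<omega> p b \<alpha>) | \<alpha>. True}"
      by blast
  qed
  finally show "products x \<in> mat_span r {products (\<lambda>b. Gcal n r d \<omega> p b \<alpha>) | \<alpha>. True}" .
qed

lemma span_products_eq_span_Gcal_products:
  "mat_span r {products x | x. True} = mat_span r {products (\<lambda>b. Gcal n r d \<omega> p b \<alpha>) | \<alpha>. True}"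
proof
  show "mat_span r {products x | x. True} \<subseteq> mat_span r {products (\<lambda>b. Gcal n r d \<omega> p b \<alpha>) | \<alpha>. True}"
    by (rule mat_span_subset_mat_span[OF products_in_span_Gcal_products])
  show "mat_span r {products (\<lambda>b. Gcal n r d \<omega> p b \<alpha>) | \<alpha>. True} \<subseteq> mat_span r {products x | x. True}"
  proof (rule mat_span_mono, rule subsetI)
    fix A assume "A \<in> {products (\<lambda>b. Gcal n r d \<omega> p b \<alpha>) | \<alpha>. True}"
    then obtain \<alpha> where "A = products (\<lambda>b. Gcal n r d \<omega> p b \<alpha>)" by blast
    then show "A \<in> {products x | x. True}"
      by (intro CollectI exI[of _ "\<lambda>b. Gcal n r d \<omega> p b \<alpha>"]) simp
  qed
qed

end

theorem lemma3p10:
  fixes n r d :: nat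
    and \<omega> :: "'a::field"
    and \<beta> :: "nat \<Rightarrow> 'a"
    and p :: "nat \<Rightarrow> 'a poly"
    and M :: "nat \<Rightarrow> 'a poly mat"
  assumes "n \<ge> 1" and "r \<ge> 1"
    and "infinite (UNIV :: 'a set) \<or> card (UNIV :: 'a set) > (2 ^ d * n * r ^ 3) ^ 2"
    and "\<omega> \<noteq> 0"
    and "\<forall>k. 0 < k \<and> k < (2 ^ d * n * r ^ 2) ^ 2 \<longrightarrow> \<omega> ^ k \<noteq> 1"
    and "inj_on \<beta> {..<r^2}"
    and "\<forall>l<r^2. degree (p l) < r^2 \<and>
           (\<forall>i<r^2. poly (p l) (\<beta> i) = (if i = l then 1 else 0))"
    and "\<forall>b<2^d. M b \<in> carrier_mat r r \<and>
           (\<forall>i<r. \<forall>j<r. degree (M b $$ (i, j)) < n)"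
  shows "mat_span r {mat_prod_list r
            (map (\<lambda>b. map_mat (\<lambda>q. poly q (x b)) (M b)) [0..<2^d]) | x. True}
       = mat_span r {mat_prod_list r
            (map (\<lambda>b. map_mat (\<lambda>q. poly q (Gcal n r d \<omega> p b \<alpha>)) (M b)) [0..<2^d]) | \<alpha>. True}"
proof -
  interpret Gcal_setting n r d \<omega> \<beta> p M
    using assms(1-5,7,8) by unfold_locales
  show ?thesis by (rule span_products_eq_span_Gcal_products)
qed

end
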